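(* Let $h'_1,h'_2,l'_1,l'_2,\alpha'_1,\alpha'_2,\beta'$ be such that $N:=(h'_1-h'_2-l'_1+l'_2+\alpha'_1-\alpha'_2+\beta'-2)/2$ is a non-negative integer, and assume $\beta'<0$ and $\alpha'_1<\alpha'_2$ (real). Let $c_n(E')$, $c(E')$ be the polynomials of the context built from $h''_1=l'_1,\ l''_1=h'_1,\ h''_2=h'_2,\ l''_2=l'_2,\ \alpha''_i=\alpha'_i,\ \beta''=\beta'$, and let $c(E'_0)=0$. Let $\alpha_1\in\mathbb{C}$ be arbitrary and define $\alpha_2=\alpha_1-\alpha'_1+\alpha'_2+h'_2-l'_2+1+N$, $\beta=h'_1-l'_1+\alpha'_1-\alpha'_2-1-N$, $l_1=l'_1$, $l_2=l'_2$, $h_1=h'_1-h'_2+l'_2-1-N$, $h_2=l'_2-1-N$, $E=q^{\alpha_1-\alpha'_1}E'_0$. Let $\xi\neq0$ be either independent of $x$ or of the form $\xi=Ax$ with $A$ independent of $x$, and assume $\xi$, $x$ are such that no factor in a denominator below vanishes. Then the series $$g_1(x)=(1-q)x^{-\alpha_1}\frac{(q^{-l'_1+1/2}\xi/t_1,\ q^{-h'_2+l'_2-N}\xi/x;q)_\infty}{(q^{-h'_1+1/2}\xi/t_1,\ \xi/x;q)_\infty}\sum_{n=-\infty}^{\infty}\frac{(q^{-h'_1+1/2}\xi/t_1,\ \xi/x;q)_n}{(q^{-l'_1+1/2}\xi/t_1,\ q^{-h'_2+l'_2-N}\xi/x;q)_n}\sum_{k=0}^{N}q^{(-\beta'+1+k)n}\xi^{-\beta'+1+k}c_k(E'_0),$$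 $$g_2(x)=(1-q)x^{-\alpha_1-h'_2+l'_2-N}\frac{(q^{h'_1+1/2}t_1/\xi,\ qx/\xi;q)_\infty}{(q^{l'_1+1/2}t_1/\xi,\ q^{h'_2-l'_2+N+1}x/\xi;q)_\infty}\sum_{n=-\infty}^{\infty}\frac{(q^{l'_1+1/2}t_1/\xi,\ q^{h'_2-l'_2+N+1}x/\xi;q)_n}{(q^{h'_1+1/2}t_1/\xi,\ qx/\xi;q)_n}\sum_{k=0}^{N}q^{(-\alpha'_1+\alpha'_2+1+N-k)n}\xi^{\alpha'_1-\alpha'_2-1-N+k}c_k(E'_0)$$ converge and satisfy $A^{\langle4\rangle}(x;h_1,h_2,l_1,l_2,\alpha_1,\alpha_2,\beta)g_i(x)=Eg_i(x)$ for $i=1,2$.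
   Context: $q\in\mathbb{C}$ with $0<|q|<1$; powers $q^{a}$ via a fixed branch of $\log q$ (so for real $a$, $|q^a|=|q|^a$), $x^a,\xi^a$ fixed branches. $(a;q)_\infty=\prod_{k\ge0}(1-aq^k)$, $(a;q)_n=(a;q)_\infty/(aq^n;q)_\infty$ for all $n\in\mathbb{Z}$, $(a_1,\dots,a_m;q)_n=\prod_i(a_i;q)_n$. $t_1,t_2$ fixed non-zero constants; $T_x^{\pm1}g(x)=g(q^{\pm1}x)$; $A^{\langle 4\rangle}(x;h_1,h_2,l_1,l_2,\alpha_1,\alpha_2,\beta)=x^{-1}(x-q^{h_1+1/2}t_1)(x-q^{h_2+1/2}t_2)T_x^{-1}+q^{\alpha_1+\alpha_2}x^{-1}(x-q^{l_1-1/2}t_1)(x-q^{l_2-1/2}t_2)T_x-\{(q^{\alpha_1}+q^{\alpha_2})x+q^{(h_1+h_2+l_1+l_2+\alpha_1+\alpha_2)/2}(q^{\beta/2}+q^{-\beta/2})t_1t_2x^{-1}\}$. Polynomials: given $(h''_1,h''_2,l''_1,l''_2,\alpha''_1,\alpha''_2,\beta'')$ and $N$ with $\beta''\notin\{1,\dots,N\}$, put $\lambda''_1=(h''_1+h''_2-l''_1-l''_2-\alpha''_1-\alpha''_2-\beta''+2)/2$, $x''_n=t_1t_2q^{1-n+h''_1+h''_2-\lambda''_1}(1-q^{n})(1-q^{n-\beta''})$, $y''_n=q^{3/2-n-\lambda''_1}(q^{h''_1}t_1+q^{h''_2}t_2)+q^{n-3/2+\lambda''_1+\alpha''_1+\alpha''_2}(q^{l''_1}t_1+q^{l''_2}t_2)$,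 $z''_n=q^{2-n-\lambda''_1}(1-q^{n-2+\lambda''_1+\alpha''_1})(1-q^{n-2+\lambda''_1+\alpha''_2})$; $c_{-1}=0$, $c_0=1$, $c_n(E'')x''_n=c_{n-1}(E'')(E''+y''_n)-c_{n-2}(E'')z''_n$ ($1\le n\le N$), $c(E'')=x''_1\cdots x''_N[c_N(E'')(E''+y''_{N+1})-c_{N-1}(E'')z''_{N+1}]$. *)

theory Defs
  imports "HOL-Analysis.Analysis"
begin

text \<open>Powers of q: q^a := exp (a * Lq), where Lq is the fixed branch of log q.\<close>
definition qpw :: "complex \<Rightarrow> complex \<Rightarrow> complex" where
  "qpw Lq a = exp (a * Lq)"

definition qinf :: "complex \<Rightarrow> complex \<Rightarrow> complex" where
  "qinf q a = prodinf (\<lambda>k. 1 - a * q ^ k)"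

definition qpoch :: "complex \<Rightarrow> complex \<Rightarrow> int \<Rightarrow> complex" where
  "qpoch q a n = qinf q a / qinf q (a * q powi n)"

text \<open>The operator A<4>(x;h1,h2,l1,l2,al1,al2,be), acting on a function g of x,
  written in the logarithmic variable u (x = exp u), so that T_x^{+-1} is u -> u +- Lq.\<close>
definition A4 :: "complex \<Rightarrow> complex \<Rightarrow> complex \<Rightarrow> complex \<Rightarrow> complex \<Rightarrow> complex \<Rightarrow> complex
    \<Rightarrow> complex \<Rightarrow> complex \<Rightarrow> complex \<Rightarrow> (complex \<Rightarrow> complex) \<Rightarrow> complex \<Rightarrow> complex" where
  "A4 Lq t1 t2 h1 h2 l1 l2 al1 al2 be g u =
     (let x = exp u; Q = qpw Lq in
        inverse x * (x - Q (h1 + 1/2) * t1) * (x - Q (h2 + 1/2) * t2) * g (u - Lq)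
      + Q (al1 + al2) * inverse x * (x - Q (l1 - 1/2) * t1) * (x - Q (l2 - 1/2) * t2) * g (u + Lq)
      - ((Q al1 + Q al2) * x
         + Q ((h1 + h2 + l1 + l2 + al1 + al2) / 2) * (Q (be / 2) + Q (- be / 2)) * t1 * t2 * inverse x)
        * g u)"

definition lam1 :: "complex \<Rightarrow> complex \<Rightarrow> complex \<Rightarrow> complex \<Rightarrow> complex \<Rightarrow> complex \<Rightarrow> complex \<Rightarrow> complex" where
  "lam1 h1 h2 l1 l2 al1 al2 be = (h1 + h2 - l1 - l2 - al1 - al2 - be + 2) / 2"

definition xs :: "complex \<Rightarrow> complex \<Rightarrow> complex \<Rightarrow> complex \<Rightarrow> complex \<Rightarrow> complex \<Rightarrow> complex
    \<Rightarrow> complex \<Rightarrow> complex \<Rightarrow> complex \<Rightarrow> nat \<Rightarrow> complex" where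
  "xs Lq t1 t2 h1 h2 l1 l2 al1 al2 be n =
     (let Q = qpw Lq; lam = lam1 h1 h2 l1 l2 al1 al2 be in
       t1 * t2 * Q (1 - of_nat n + h1 + h2 - lam) * (1 - Q (of_nat n)) * (1 - Q (of_nat n - be)))"

definition ys :: "complex \<Rightarrow> complex \<Rightarrow> complex \<Rightarrow> complex \<Rightarrow> complex \<Rightarrow> complex \<Rightarrow> complex
    \<Rightarrow> complex \<Rightarrow> complex \<Rightarrow> complex \<Rightarrow> nat \<Rightarrow> complex" where
  "ys Lq t1 t2 h1 h2 l1 l2 al1 al2 be n =
     (let Q = qpw Lq; lam = lam1 h1 h2 l1 l2 al1 al2 be in
       Q (3/2 - of_nat n - lam) * (Q h1 * t1 + Q h2 * t2)
       + Q (of_nat n - 3/2 + lam + al1 + al2) * (Q l1 * t1 + Q l2 * t2))"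

definition zs :: "complex \<Rightarrow> complex \<Rightarrow> complex \<Rightarrow> complex \<Rightarrow> complex \<Rightarrow> complex \<Rightarrow> complex
    \<Rightarrow> complex \<Rightarrow> complex \<Rightarrow> complex \<Rightarrow> nat \<Rightarrow> complex" where
  "zs Lq t1 t2 h1 h2 l1 l2 al1 al2 be n =
     (let Q = qpw Lq; lam = lam1 h1 h2 l1 l2 al1 al2 be in
       Q (2 - of_nat n - lam) * (1 - Q (of_nat n - 2 + lam + al1)) * (1 - Q (of_nat n - 2 + lam + al2)))"

fun crec :: "(nat \<Rightarrow> complex) \<Rightarrow> (nat \<Rightarrow> complex) \<Rightarrow> (nat \<Rightarrow> complex) \<Rightarrow> complex \<Rightarrow> nat \<Rightarrow> complex" where
  "crec X Y Z E 0 = 1"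
| "crec X Y Z E (Suc 0) = (E + Y 1) / X 1"
| "crec X Y Z E (Suc (Suc n)) =
     (crec X Y Z E (Suc n) * (E + Y (n + 2)) - crec X Y Z E n * Z (n + 2)) / X (n + 2)"

definition cfin :: "(nat \<Rightarrow> complex) \<Rightarrow> (nat \<Rightarrow> complex) \<Rightarrow> (nat \<Rightarrow> complex) \<Rightarrow> nat \<Rightarrow> complex \<Rightarrow> complex" where
  "cfin X Y Z N E = (\<Prod>n\<in>{1..N}. X n) *
     (crec X Y Z E N * (E + Y (N + 1)) - (if N = 0 then 0 else crec X Y Z E (N - 1)) * Z (N + 1))"



text \<open>c_n(E) and c(E) for parameters (h1,h2,l1,l2,al1,al2,be) (the double-primed ones of the paper).\<close>
definition cseq :: "complex \<Rightarrow> complex \<Rightarrow> complex \<Rightarrow> complex \<Rightarrow> complex \<Rightarrow> complex \<Rightarrow> complex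
    \<Rightarrow> complex \<Rightarrow> complex \<Rightarrow> complex \<Rightarrow> complex \<Rightarrow> nat \<Rightarrow> complex" where
  "cseq Lq t1 t2 h1 h2 l1 l2 al1 al2 be E n =
     crec (xs Lq t1 t2 h1 h2 l1 l2 al1 al2 be) (ys Lq t1 t2 h1 h2 l1 l2 al1 al2 be)
          (zs Lq t1 t2 h1 h2 l1 l2 al1 al2 be) E n"

definition cpoly :: "complex \<Rightarrow> complex \<Rightarrow> complex \<Rightarrow> complex \<Rightarrow> complex \<Rightarrow> complex \<Rightarrow> complex
    \<Rightarrow> complex \<Rightarrow> complex \<Rightarrow> complex \<Rightarrow> nat \<Rightarrow> complex \<Rightarrow> complex" where
  "cpoly Lq t1 t2 h1 h2 l1 l2 al1 al2 be N E =
     cfin (xs Lq t1 t2 h1 h2 l1 l2 al1 al2 be) (ys Lq t1 t2 h1 h2 l1 l2 al1 al2 be)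
          (zs Lq t1 t2 h1 h2 l1 l2 al1 al2 be) N E"

text \<open>The four q-Pochhammer parameters of g_1 (in the log variable u, x = exp u, xi = exp (Lxi u)).\<close>
definition par1 :: "complex \<Rightarrow> complex \<Rightarrow> complex \<Rightarrow> complex \<Rightarrow> complex \<Rightarrow> complex \<Rightarrow> nat
    \<Rightarrow> (complex \<Rightarrow> complex) \<Rightarrow> complex \<Rightarrow> complex \<times> complex \<times> complex \<times> complex" where
  "par1 Lq t1 hp1 hp2 lp1 lp2 N Lxi u =
     (qpw Lq (- hp1 + 1/2) * exp (Lxi u) / t1,
      exp (Lxi u) / exp u,
      qpw Lq (- lp1 + 1/2) * exp (Lxi u) / t1,
      qpw Lq (- hp2 + lp2 - of_nat N) * exp (Lxi u) / exp u)"

text \<open>The four q-Pochhammer parameters of g_2, ordered (numerator, numerator, denominator, denominator)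
  as they occur in the bilateral sum: (q^{l'_1+1/2}t_1/xi, q^{h'_2-l'_2+N+1}x/xi; q^{h'_1+1/2}t_1/xi, qx/xi).\<close>
definition par2 :: "complex \<Rightarrow> complex \<Rightarrow> complex \<Rightarrow> complex \<Rightarrow> complex \<Rightarrow> complex \<Rightarrow> nat
    \<Rightarrow> (complex \<Rightarrow> complex) \<Rightarrow> complex \<Rightarrow> complex \<times> complex \<times> complex \<times> complex" where
  "par2 Lq t1 hp1 hp2 lp1 lp2 N Lxi u =
     (qpw Lq (lp1 + 1/2) * t1 / exp (Lxi u),
      qpw Lq (hp2 - lp2 + of_nat N + 1) * exp u / exp (Lxi u),
      qpw Lq (hp1 + 1/2) * t1 / exp (Lxi u),
      exp Lq * exp u / exp (Lxi u))"

text \<open>Non-vanishing of all factors appearing in denominators: for parameters a, b (which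
  appear in the denominator of the prefactor and, for negative n, in the denominator of the
  summand) all shifts a q^m, m in Z; for c, d (denominator of the summand for positive n) the
  shifts c q^m, m >= 0.\<close>
definition admissible :: "complex \<Rightarrow> complex \<times> complex \<times> complex \<times> complex \<Rightarrow> bool" where
  "admissible q p = (case p of (a, b, c, d) \<Rightarrow>
     (\<forall>m::int. a * q powi m \<noteq> 1 \<and> b * q powi m \<noteq> 1) \<and> (\<forall>m::nat. c * q ^ m \<noteq> 1 \<and> d * q ^ m \<noteq> 1))"

definition bilat_term :: "complex \<Rightarrow> complex \<times> complex \<times> complex \<times> complex \<Rightarrow> (int \<Rightarrow> complex) \<Rightarrow> int \<Rightarrow> complex" where
  "bilat_term q p S n = (case p of (a, b, c, d) \<Rightarrow>
     qpoch q a n * qpoch q b n / (qpoch q c n * qpoch q d n) * S n)"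

definition prefac :: "complex \<Rightarrow> complex \<times> complex \<times> complex \<times> complex \<Rightarrow> complex" where
  "prefac q p = (case p of (a, b, c, d) \<Rightarrow> qinf q c * qinf q d / (qinf q a * qinf q b))"

end

theory Submission
  imports Defs
begin

text \<open>
  Write \<open>x = e\<^sup>v\<close>, \<open>\<xi> = e\<^sup>\<sigma>\<close> and \<open>Lq = log q\<close>. Each \<open>g\<^sub>i\<close> is a Jackson integral
  \<open>(1 - q) \<Sum>\<^sub>n K\<^sub>i(\<sigma> + n Lq, x) P\<^sub>i(\<sigma> + n Lq)\<close> of a kernel \<open>K\<^sub>i\<close>, a quotient of infinite
  \<open>q\<close>-products, against a finite sum \<open>P\<^sub>i\<close> of powers of \<open>\<xi>\<close> with coefficients \<open>c\<^sub>k(E'\<^sub>0)\<close>.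
  Since \<open>(a;q)\<^sub>\<infinity> = (1 - a) (aq;q)\<^sub>\<infinity>\<close>, the shifts of \<open>K\<^sub>i\<close> in \<open>x\<close> and in \<open>\<xi>\<close> are polynomial
  multiples of one common factor, and \<open>A\<^sup>\<langle>\<^sup>4\<^sup>\<rangle>\<close> applied to \<open>K\<^sub>i\<close> in \<open>x\<close> becomes
  \<open>q^(\<alpha>\<^sub>1 - \<alpha>'\<^sub>1)\<close> times a second-order \<open>q\<close>-difference operator applied to \<open>K\<^sub>i\<close> in \<open>\<xi>\<close>.
  Summation by parts on the lattice moves that operator onto \<open>P\<^sub>i\<close> as its adjoint, which acts on the
  powers of \<open>\<xi>\<close> through the three-term recursion of the \<open>c\<^sub>k\<close>; the recursion telescopes to the
  boundary term \<open>c(E'\<^sub>0) = 0\<close>, so \<open>P\<^sub>i\<close> is an eigenfunction of the adjoint with eigenvalue \<open>E'\<^sub>0\<close>.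
  All lattice sums converge by the ratio test at both ends of the lattice; \<open>\<beta>' < 0\<close> and
  \<open>\<alpha>'\<^sub>1 < \<alpha>'\<^sub>2\<close> keep every exponent that occurs inside the range where the kernel decays.
\<close>

section \<open>Infinite \<open>q\<close>-products\<close>

lemma qpw_add: "qpw Lq (a + b) = qpw Lq a * qpw Lq b"
  by (simp add: qpw_def distrib_right exp_add)

lemma qpw_minus: "qpw Lq (- a) = inverse (qpw Lq a)"
  by (simp add: qpw_def exp_minus)

lemma qpw_nonzero [simp]: "qpw Lq a \<noteq> 0"
  by (simp add: qpw_def)

lemma qpw_0 [simp]: "qpw Lq 0 = 1"
  by (simp add: qpw_def)

lemma qpw_1 [simp]: "qpw Lq 1 = exp Lq"
  by (simp add: qpw_def)

lemma qpw_mult_qpw_minus: "qpw Lq a * qpw Lq (- a) = 1"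
  by (simp add: qpw_minus)

lemma qinf_has_prod:
  assumes "norm q < 1"
  shows "(\<lambda>k. 1 - a * q ^ k) has_prod qinf q a"
proof -
  have "summable (\<lambda>k. norm ((1 - a * q ^ k) - 1))"
    using assms by (simp add: norm_mult norm_power summable_mult summable_geometric)
  then have "convergent_prod (\<lambda>k. 1 - a * q ^ k)"
    by (intro abs_convergent_prod_imp_convergent_prod summable_imp_abs_convergent_prod)
  then show ?thesis
    unfolding qinf_def by (simp add: convergent_prod_has_prod_iff)
qed

lemma qinf_shift:
  assumes "norm q < 1"
  shows "qinf q a = (1 - a) * qinf q (a * q)"
proof -
  have "(\<lambda>k. 1 - a * q ^ Suc k) has_prod qinf q (a * q)"
    using qinf_has_prod[OF assms, of "a * q"] by (simp add: mult.assoc)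
  then have "(\<lambda>k. 1 - a * q ^ k) has_prod (qinf q (a * q) * (1 - a))"
    using has_prod_Suc_imp[of "\<lambda>k. 1 - a * q ^ k"] by simp
  then show ?thesis
    using has_prod_unique2[OF _ qinf_has_prod[OF assms]] by (metis mult.commute)
qed

lemma qinf_shift_inverse:
  assumes "norm q < 1" "q \<noteq> 0"
  shows "qinf q (z * inverse q) = (1 - z * inverse q) * qinf q z"
  using qinf_shift[OF assms(1), of "z * inverse q"] assms(2) by (simp add: mult.assoc)

lemma qinf_nonzero:
  assumes "norm q < 1" "\<And>k. a * q ^ k \<noteq> 1"
  shows "qinf q a \<noteq> 0"
proof
  assume "qinf q a = 0"
  then have "0 \<in> range (\<lambda>k. 1 - a * q ^ k)"
    using has_prod_eq_0_iff[OF qinf_has_prod[OF assms(1)]] by simp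
  then show False
    using assms(2) by force
qed

definition qinf_ratio :: "complex \<Rightarrow> complex \<Rightarrow> complex \<Rightarrow> complex \<Rightarrow> complex \<Rightarrow> complex" where
  "qinf_ratio q a b c d = qinf q c * qinf q d / (qinf q a * qinf q b)"

lemma qinf_ratio_shift:
  assumes "norm q < 1"
  shows "qinf_ratio q a b c d
    = qinf_ratio q (a * q) (b * q) (c * q) (d * q) * ((1 - c) * (1 - d) / ((1 - a) * (1 - b)))"
  unfolding qinf_ratio_def
  by (subst (1 2 3 4) qinf_shift[OF assms]) (simp add: divide_inverse inverse_mult_distrib ac_simps)

text \<open>The five quotients of infinite products met by the kernel under the shifts
  \<open>x \<mapsto> q\<^sup>\<plusminus>\<^sup>1x\<close> and \<open>\<xi> \<mapsto> q\<^sup>\<plusminus>\<^sup>1\<xi>\<close>, written over the common factor \<open>G\<close>.\<close>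
lemma qinf_ratio_shifted_forms:
  fixes a b c d :: complex
  assumes q: "norm q < 1" "q \<noteq> 0"
    and a: "qinf q (a * inverse q) \<noteq> 0" and b: "qinf q (b * inverse q) \<noteq> 0"
  defines "G \<equiv> qinf q (c * q) * qinf q (d * q) / (qinf q (a * inverse q) * qinf q (b * inverse q))"
  shows "qinf_ratio q a b c d = G * ((1 - c) * (1 - d) * (1 - a * inverse q) * (1 - b * inverse q))"
    and "qinf_ratio q a (b * q) c (d * q) = G * ((1 - c) * (1 - a * inverse q) * (1 - b * inverse q) * (1 - b))"
    and "qinf_ratio q a (b * inverse q) c (d * inverse q)
           = G * ((1 - c) * (1 - d * inverse q) * (1 - d) * (1 - a * inverse q))"
    and "qinf_ratio q (a * q) (b * q) (c * q) (d * q)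
           = G * ((1 - a * inverse q) * (1 - a) * (1 - b * inverse q) * (1 - b))"
    and "qinf_ratio q (a * inverse q) (b * inverse q) (c * inverse q) (d * inverse q)
           = G * ((1 - c * inverse q) * (1 - c) * (1 - d * inverse q) * (1 - d))"
proof -
  have num: "qinf q z = (1 - z) * qinf q (z * q)" for z
    by (rule qinf_shift[OF q(1)])
  have num_inv: "qinf q (z * inverse q) = (1 - z * inverse q) * (1 - z) * qinf q (z * q)" for z
    using qinf_shift_inverse[OF q, of z] num[of z] by simp
  have den: "inverse (qinf q z) = (1 - z * inverse q) / qinf q (z * inverse q)"
    and den_q: "inverse (qinf q (z * q)) = (1 - z * inverse q) * (1 - z) / qinf q (z * inverse q)"
    if "qinf q (z * inverse q) \<noteq> 0" for z
  proof -
    have inv: "inverse B = f / A" if "A = f * B" "A \<noteq> 0" for A B f :: complex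
      using that by (simp add: field_simps)
    have "qinf q (z * inverse q) = (1 - z * inverse q) * qinf q z"
      by (rule qinf_shift_inverse[OF q])
    then show "inverse (qinf q z) = (1 - z * inverse q) / qinf q (z * inverse q)"
      using that by (rule inv)
    have "qinf q (z * inverse q) = ((1 - z * inverse q) * (1 - z)) * qinf q (z * q)"
      using num_inv[of z] by simp
    then show "inverse (qinf q (z * q)) = (1 - z * inverse q) * (1 - z) / qinf q (z * inverse q)"
      using that by (rule inv)
  qed
  have d: "x / (y * z) = x * inverse y * inverse z" for x y z :: complex
    by (simp add: divide_inverse)
  note dd = den[OF a] den[OF b] den_q[OF a] den_q[OF b]
  show "qinf_ratio q a b c d = G * ((1 - c) * (1 - d) * (1 - a * inverse q) * (1 - b * inverse q))"
    unfolding qinf_ratio_def d G_def dd num[of c] num[of d] by (simp add: divide_inverse ac_simps)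
  show "qinf_ratio q a (b * q) c (d * q) = G * ((1 - c) * (1 - a * inverse q) * (1 - b * inverse q) * (1 - b))"
    unfolding qinf_ratio_def d G_def dd num[of c] by (simp add: divide_inverse ac_simps)
  show "qinf_ratio q a (b * inverse q) c (d * inverse q)
      = G * ((1 - c) * (1 - d * inverse q) * (1 - d) * (1 - a * inverse q))"
    unfolding qinf_ratio_def d G_def dd num[of c] num_inv[of d] by (simp add: divide_inverse ac_simps)
  show "qinf_ratio q (a * q) (b * q) (c * q) (d * q) = G * ((1 - a * inverse q) * (1 - a) * (1 - b * inverse q) * (1 - b))"
    unfolding qinf_ratio_def d G_def dd by (simp add: divide_inverse ac_simps)
  show "qinf_ratio q (a * inverse q) (b * inverse q) (c * inverse q) (d * inverse q)
      = G * ((1 - c * inverse q) * (1 - c) * (1 - d * inverse q) * (1 - d))"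
    unfolding qinf_ratio_def d G_def num_inv[of c] num_inv[of d] by (simp add: divide_inverse ac_simps)
qed

lemma admissible_qinf_nonzero:
  assumes q: "norm q < 1" "q \<noteq> 0" and adm: "admissible q (a, b, c, d)"
  shows "qinf q (a * q powi j) \<noteq> 0" "qinf q (b * q powi j) \<noteq> 0" "qinf q c \<noteq> 0" "qinf q d \<noteq> 0"
proof -
  have shifted: "qinf q (z * q powi j) \<noteq> 0" if "\<forall>m::int. z * q powi m \<noteq> 1" for z
  proof (rule qinf_nonzero[OF q(1)])
    fix k :: nat
    have "z * q powi j * q ^ k = z * q powi (j + int k)"
      using q(2) by (simp add: power_int_add mult.assoc)
    then show "z * q powi j * q ^ k \<noteq> 1"
      using that by metis
  qed
  have "\<forall>m::int. a * q powi m \<noteq> 1" "\<forall>m::int. b * q powi m \<noteq> 1"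
    using adm by (auto simp: admissible_def)
  then show "qinf q (a * q powi j) \<noteq> 0" "qinf q (b * q powi j) \<noteq> 0"
    by (simp_all add: shifted)
  show "qinf q c \<noteq> 0" "qinf q d \<noteq> 0"
    using adm by (simp_all add: admissible_def qinf_nonzero[OF q(1)])
qed

lemma prefac_nonzero:
  assumes "norm q < 1" "q \<noteq> 0" "admissible q (a, b, c, d)"
  shows "prefac q (a, b, c, d) \<noteq> 0"
  using admissible_qinf_nonzero(1,2)[OF assms, of 0] admissible_qinf_nonzero(3,4)[OF assms]
  by (simp add: prefac_def)

lemma prefac_mult_bilat_term:
  assumes q: "norm q < 1" "q \<noteq> 0" and adm: "admissible q (a, b, c, d)"
  shows "prefac q (a, b, c, d) * bilat_term q (a, b, c, d) S n
    = qinf_ratio q (a * q powi n) (b * q powi n) (c * q powi n) (d * q powi n) * S n"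
proof -
  note nz = admissible_qinf_nonzero[OF q adm]
  show ?thesis
  proof (cases "qinf q (c * q powi n) = 0 \<or> qinf q (d * q powi n) = 0")
    case True
    then show ?thesis
      by (auto simp: prefac_def bilat_term_def qinf_ratio_def qpoch_def)
  next
    case False
    then show ?thesis
      using nz(1,2)[of 0] nz(1,2)[of n] nz(3,4) by (simp add: prefac_def bilat_term_def qinf_ratio_def qpoch_def field_simps)
  qed
qed

section \<open>Summability along \<open>q\<close>-lattices\<close>

lemma summable_on_ratio_test:
  fixes f :: "nat \<Rightarrow> 'a :: banach"
  assumes "r < 1" "eventually (\<lambda>n. norm (f (Suc n)) \<le> r * norm (f n)) sequentially"
  shows "f summable_on UNIV"
proof -
  from assms(2) obtain M where "\<And>n. n \<ge> M \<Longrightarrow> norm (f (Suc n)) \<le> r * norm (f n)"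
    by (auto simp: eventually_sequentially)
  then have "summable (\<lambda>n. norm (f n))"
    by (intro summable_ratio_test[OF assms(1), of M]) auto
  then show ?thesis
    by (rule norm_summable_imp_summable_on)
qed

lemma summable_on_int_from_halves:
  fixes f :: "int \<Rightarrow> complex"
  assumes "(\<lambda>m::nat. f (int m)) summable_on UNIV" "(\<lambda>m::nat. f (- int m)) summable_on UNIV"
  shows "f summable_on UNIV"
proof -
  have "f summable_on range int"
    using assms(1) by (subst summable_on_reindex) (auto simp: o_def)
  moreover have "f summable_on range (\<lambda>m::nat. - int m)"
    using assms(2) by (subst summable_on_reindex) (auto simp: o_def inj_on_def)
  moreover have "range int \<union> range (\<lambda>m::nat. - int m) = UNIV"
  proof -
    have "x \<in> range int \<union> range (\<lambda>m::nat. - int m)" for x :: int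
    proof (cases "x \<ge> 0")
      case True
      then show ?thesis by (metis UnI1 nonneg_int_cases rangeI)
    next
      case False
      then have "x = - int (nat (- x))" by simp
      then show ?thesis by (metis UnI2 rangeI)
    qed
    then show ?thesis by blast
  qed
  ultimately show ?thesis
    by (metis summable_on_union)
qed

lemma qinf_ratio_lattice_summable_up:
  assumes q: "norm q < 1" and \<rho>: "norm \<rho> < 1"
  shows "(\<lambda>m::nat. qinf_ratio q (a * q ^ m) (b * q ^ m) (c * q ^ m) (d * q ^ m) * \<rho> ^ m)
           summable_on UNIV"
proof -
  define f where "f m = qinf_ratio q (a * q ^ m) (b * q ^ m) (c * q ^ m) (d * q ^ m)" for m
  define R where "R m = (1 - a * q ^ m) * (1 - b * q ^ m) / ((1 - c * q ^ m) * (1 - d * q ^ m))" for m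
  have qm: "(\<lambda>m. q ^ m) \<longlonglongrightarrow> 0"
    using q by (intro LIMSEQ_power_zero)
  have "R \<longlonglongrightarrow> (1 - a * 0) * (1 - b * 0) / ((1 - c * 0) * (1 - d * 0))"
    unfolding R_def by (intro tendsto_intros qm) auto
  then have "(\<lambda>m. norm \<rho> * norm (R m)) \<longlonglongrightarrow> norm \<rho> * norm (1::complex)"
    by (intro tendsto_intros) simp
  then have ev_R: "eventually (\<lambda>m. norm \<rho> * norm (R m) < (1 + norm \<rho>) / 2) sequentially"
    using \<rho> by (intro order_tendstoD(2)) auto
  have ev_factor: "eventually (\<lambda>m. 1 - z * q ^ m \<noteq> 0) sequentially" for z
  proof -
    have "(\<lambda>m. 1 - z * q ^ m) \<longlonglongrightarrow> 1 - z * 0"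
      by (intro tendsto_intros qm)
    then show ?thesis
      by (intro tendsto_imp_eventually_ne) auto
  qed
  show ?thesis
    unfolding f_def[symmetric]
  proof (rule summable_on_ratio_test[of "(1 + norm \<rho>) / 2"])
    show "(1 + norm \<rho>) / 2 < 1"
      using \<rho> by simp
    show "eventually (\<lambda>m. norm (f (Suc m) * \<rho> ^ Suc m) \<le> (1 + norm \<rho>) / 2 * norm (f m * \<rho> ^ m)) sequentially"
      using ev_R ev_factor[of a] ev_factor[of b] ev_factor[of c] ev_factor[of d]
    proof eventually_elim
      case (elim m)
      define X where "X = (1 - a * q ^ m) * (1 - b * q ^ m)"
      define Y where "Y = (1 - c * q ^ m) * (1 - d * q ^ m)"
      have "X \<noteq> 0" "Y \<noteq> 0"
        using elim by (simp_all add: X_def Y_def)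
      moreover have "f m = f (Suc m) * (Y / X)"
        unfolding f_def X_def Y_def using qinf_ratio_shift[OF q, of "a * q ^ m"] by (simp add: ac_simps)
      ultimately have "f (Suc m) = f m * R m"
        unfolding R_def X_def[symmetric] Y_def[symmetric] by simp
      then have "norm (f (Suc m) * \<rho> ^ Suc m) = norm \<rho> * norm (R m) * norm (f m * \<rho> ^ m)"
        by (simp add: norm_mult norm_power)
      also have "\<dots> \<le> (1 + norm \<rho>) / 2 * norm (f m * \<rho> ^ m)"
        using elim(1) by (intro mult_right_mono) auto
      finally show ?case .
    qed
  qed
qed

lemma qinf_ratio_lattice_summable_down:
  assumes q: "norm q < 1" "q \<noteq> 0" and ab: "a \<noteq> 0" "b \<noteq> 0"
    and cd: "norm (c * d) < norm \<rho> * norm (a * b)"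
  shows "(\<lambda>m::nat. qinf_ratio q (a * q powi - int m) (b * q powi - int m) (c * q powi - int m) (d * q powi - int m)
            * \<rho> powi - int m) summable_on UNIV"
proof -
  define f where "f m = qinf_ratio q (a * q powi - int m) (b * q powi - int m) (c * q powi - int m) (d * q powi - int m)" for m
  define \<phi> where "\<phi> w = (w - c) * (w - d) / ((w - a) * (w - b))" for w
  define t where "t = norm (c * d / (a * b)) / norm \<rho>"
  have \<rho>: "\<rho> \<noteq> 0"
    using cd by auto
  have t: "t < 1"
    using cd ab \<rho> by (simp add: t_def norm_mult norm_divide field_simps)
  have "(\<lambda>m. q ^ Suc m) \<longlonglongrightarrow> 0"
    using q by (intro LIMSEQ_power_zero[THEN LIMSEQ_Suc])
  then have "(\<lambda>m. \<phi> (q ^ Suc m)) \<longlonglongrightarrow> (0 - c) * (0 - d) / ((0 - a) * (0 - b))"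
    unfolding \<phi>_def by (intro tendsto_intros) (use ab in auto)
  then have "(\<lambda>m. norm (\<phi> (q ^ Suc m)) / norm \<rho>) \<longlonglongrightarrow> t"
    unfolding t_def by (intro tendsto_intros) (use \<rho> in auto)
  then have ev: "eventually (\<lambda>m. norm (\<phi> (q ^ Suc m)) / norm \<rho> < (1 + t) / 2) sequentially"
    using t by (intro order_tendstoD(2)) auto
  show ?thesis
    unfolding f_def[symmetric]
  proof (rule summable_on_ratio_test[of "(1 + t) / 2"])
    show "(1 + t) / 2 < 1"
      using t by simp
    show "eventually (\<lambda>m. norm (f (Suc m) * \<rho> powi - int (Suc m)) \<le> (1 + t) / 2 * norm (f m * \<rho> powi - int m))
      sequentially"
      using ev
    proof eventually_elim
      case (elim m)
      define z where "z = q ^ Suc m"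
      have z: "z \<noteq> 0" "q powi - int (Suc m) = inverse z"
        using q(2) unfolding z_def by (simp, metis power_int_minus power_int_of_nat)
      have zq: "inverse z * q = q powi - int m"
        using q(2) by (simp add: z_def power_int_minus)
      have "f (Suc m) = qinf_ratio q (a * inverse z) (b * inverse z) (c * inverse z) (d * inverse z)"
        unfolding f_def z(2) ..
      also have "\<dots> = f m * ((1 - c * inverse z) * (1 - d * inverse z) / ((1 - a * inverse z) * (1 - b * inverse z)))"
        unfolding qinf_ratio_shift[OF q(1), of "a * inverse z"] f_def zq[symmetric] by (simp add: mult.assoc)
      also have "(1 - c * inverse z) * (1 - d * inverse z) / ((1 - a * inverse z) * (1 - b * inverse z)) = \<phi> z"
        using z by (simp add: \<phi>_def divide_simps)
      finally have f_Suc: "f (Suc m) = f m * \<phi> z" .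
      have \<rho>_powi: "\<rho> powi - int (Suc m) = inverse (\<rho> ^ Suc m)" "\<rho> powi - int m = inverse (\<rho> ^ m)"
        by (metis power_int_minus power_int_of_nat)+
      have "norm (f (Suc m) * \<rho> powi - int (Suc m)) = norm (\<phi> z) / norm \<rho> * norm (f m * \<rho> powi - int m)"
        unfolding f_Suc \<rho>_powi using \<rho> by (simp add: norm_mult norm_inverse norm_power norm_divide field_simps)
      also have "\<dots> \<le> (1 + t) / 2 * norm (f m * \<rho> powi - int m)"
        using elim by (intro mult_right_mono) (auto simp: z_def)
      finally show ?case .
    qed
  qed
qed

text \<open>For \<open>n \<rightarrow> \<infinity>\<close> the terms decay like \<open>\<rho>\<^sup>n\<close>; for \<open>n \<rightarrow> -\<infinity>\<close> the quotient of consecutive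
  terms tends to \<open>c d / (\<rho> a b)\<close>.\<close>
lemma qinf_ratio_lattice_summable:
  assumes "norm q < 1" "q \<noteq> 0" "a \<noteq> 0" "b \<noteq> 0" "norm \<rho> < 1"
    and "norm (c * d) < norm \<rho> * norm (a * b)"
  shows "(\<lambda>n::int. qinf_ratio q (a * q powi n) (b * q powi n) (c * q powi n) (d * q powi n) * \<rho> powi n)
           summable_on UNIV"
  using qinf_ratio_lattice_summable_up[of q \<rho> a b c d] qinf_ratio_lattice_summable_down[of q a b c d \<rho>] assms
  by (intro summable_on_int_from_halves) simp_all

definition lattice_summable :: "complex \<Rightarrow> (complex \<Rightarrow> complex) \<Rightarrow> bool" where
  "lattice_summable L F \<longleftrightarrow> (\<forall>\<sigma>. (\<lambda>n::int. F (\<sigma> + of_int n * L)) summable_on UNIV)"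

lemma lattice_summableD:
  "lattice_summable L F \<Longrightarrow> (\<lambda>n::int. F (\<sigma> + of_int n * L)) summable_on UNIV"
  by (simp add: lattice_summable_def)

lemma lattice_summable_add:
  "lattice_summable L F \<Longrightarrow> lattice_summable L G \<Longrightarrow> lattice_summable L (\<lambda>\<sigma>. F \<sigma> + G \<sigma>)"
  by (simp add: lattice_summable_def summable_on_add)

lemma lattice_summable_cmult:
  "lattice_summable L F \<Longrightarrow> lattice_summable L (\<lambda>\<sigma>. c * F \<sigma>)"
  by (simp add: lattice_summable_def summable_on_cmult_right)

lemma lattice_summable_sum:
  "(\<And>k. k \<in> A \<Longrightarrow> lattice_summable L (F k)) \<Longrightarrow> lattice_summable L (\<lambda>\<sigma>. \<Sum>k\<in>A. F k \<sigma>)"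
proof (induction A rule: infinite_finite_induct)
  case (insert x A)
  then show ?case
    using lattice_summable_add[of L "F x" "\<lambda>\<sigma>. \<Sum>k\<in>A. F k \<sigma>"] by simp
qed (simp_all add: lattice_summable_def)

lemma lattice_summable_qinf_ratio:
  fixes a b c d L :: complex and \<nu> \<delta> :: real
  assumes q: "exp L = q" "norm q < 1" and ab: "a \<noteq> 0" "b \<noteq> 0"
    and cd: "c * d = exp (of_real \<delta> * L) * (a * b)" and \<nu>: "0 < \<nu>" "\<nu> < \<delta>"
  shows "lattice_summable L (\<lambda>\<sigma>. qinf_ratio q (a * exp \<sigma>) (b * exp \<sigma>) (c * exp \<sigma>) (d * exp \<sigma>) * exp (of_real \<nu> * \<sigma>))"
  unfolding lattice_summable_def
proof
  fix \<sigma>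
  have ReL: "Re L < 0"
    using q by (metis exp_less_one_iff norm_exp_eq_Re)
  have exp_lattice: "exp (\<sigma> + of_int n * L) = exp \<sigma> * q powi n"
    and exp_\<nu>_lattice: "exp (of_real \<nu> * (\<sigma> + of_int n * L)) = exp (of_real \<nu> * \<sigma>) * exp (of_real \<nu> * L) powi n" for n
    using q(1) by (simp_all add: exp_add distrib_left mult.left_commute exp_power_int[symmetric])
  have "(\<lambda>n::int. qinf_ratio q (a * exp \<sigma> * q powi n) (b * exp \<sigma> * q powi n) (c * exp \<sigma> * q powi n)
      (d * exp \<sigma> * q powi n) * exp (of_real \<nu> * L) powi n) summable_on UNIV"
  proof (rule qinf_ratio_lattice_summable)
    show "norm q < 1" "q \<noteq> 0" "a * exp \<sigma> \<noteq> 0" "b * exp \<sigma> \<noteq> 0"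
      using q ab by auto
    show "norm (exp (of_real \<nu> * L)) < 1"
      using \<nu> ReL by (simp add: mult_pos_neg)
    have "norm (c * exp \<sigma> * (d * exp \<sigma>)) = exp (\<delta> * Re L) * norm (a * exp \<sigma> * (b * exp \<sigma>))"
    proof -
      have "norm (c * d) = norm (exp (of_real \<delta> * L)) * norm (a * b)"
        unfolding cd norm_mult ..
      then show ?thesis
        by (simp add: norm_mult)
    qed
    also have "\<dots> < exp (\<nu> * Re L) * norm (a * exp \<sigma> * (b * exp \<sigma>))"
      using \<nu> ReL ab by (intro mult_strict_right_mono) (simp_all add: mult_strict_right_mono_neg)
    finally show "norm (c * exp \<sigma> * (d * exp \<sigma>)) < norm (exp (of_real \<nu> * L)) * norm (a * exp \<sigma> * (b * exp \<sigma>))"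
      by simp
  qed
  from summable_on_cmult_right[OF this, of "exp (of_real \<nu> * \<sigma>)"]
  show "(\<lambda>n::int. qinf_ratio q (a * exp (\<sigma> + of_int n * L)) (b * exp (\<sigma> + of_int n * L)) (c * exp (\<sigma> + of_int n * L))
      (d * exp (\<sigma> + of_int n * L)) * exp (of_real \<nu> * (\<sigma> + of_int n * L))) summable_on UNIV"
    unfolding exp_lattice exp_\<nu>_lattice by (simp add: ac_simps)
qed

definition laurent_linear :: "(complex \<Rightarrow> complex) \<Rightarrow> bool" where
  "laurent_linear F \<longleftrightarrow> (\<exists>\<alpha> \<beta> \<gamma>. \<forall>s. F s = \<alpha> * inverse s + \<beta> + \<gamma> * s)"

lemma laurent_linear_const: "laurent_linear (\<lambda>_. c)"
  unfolding laurent_linear_def by (intro exI[of _ 0] exI[of _ c]) simp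

lemma laurent_linear_inverse_first: "laurent_linear (\<lambda>s. A * (B * inverse s - C + D * s))"
proof -
  have "\<forall>s. A * (B * inverse s - C + D * s) = A * B * inverse s + - (A * C) + A * D * s"
    by (simp add: algebra_simps)
  then show ?thesis
    unfolding laurent_linear_def by blast
qed

lemma laurent_linear_inverse_last: "laurent_linear (\<lambda>s. A * (B * s - C + D * inverse s))"
proof -
  have "\<forall>s. A * (B * s - C + D * inverse s) = A * D * inverse s + - (A * C) + A * B * s"
    by (simp add: algebra_simps)
  then show ?thesis
    unfolding laurent_linear_def by blast
qed

text \<open>Multiplying by \<open>\<xi>\<^sup>\<plusminus>\<^sup>1\<close> shifts the exponents \<open>\<nu>\<close> by \<open>\<plusminus>1\<close>; hence the margin \<open>1\<close> on both sides.\<close>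
lemma lattice_summable_laurent_exp_sum:
  fixes K F P :: "complex \<Rightarrow> complex" and \<nu> :: "nat \<Rightarrow> real"
  assumes K: "\<And>\<mu>. 0 < \<mu> \<Longrightarrow> \<mu> < \<delta> \<Longrightarrow> lattice_summable L (\<lambda>\<sigma>. K \<sigma> * exp (of_real \<mu> * \<sigma>))"
    and \<nu>: "\<And>k. k \<in> A \<Longrightarrow> 0 < \<nu> k - 1 \<and> \<nu> k + 1 < \<delta>"
    and F: "laurent_linear F"
    and P: "\<And>\<sigma>. P \<sigma> = (\<Sum>k\<in>A. c k * exp (of_real (\<nu> k) * \<sigma>))"
  shows "lattice_summable L (\<lambda>\<sigma>. K \<sigma> * F (exp \<sigma>) * P \<sigma>)"
proof -
  obtain \<alpha> \<beta> \<gamma> where F: "\<And>s. F s = \<alpha> * inverse s + \<beta> + \<gamma> * s"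
    using F unfolding laurent_linear_def by blast
  have shift: "exp (of_real (\<nu> k + t) * \<sigma>) = exp (of_real t * \<sigma>) * exp (of_real (\<nu> k) * \<sigma>)"
    for k t and \<sigma> :: complex
    by (simp add: distrib_right exp_add)
  have "K \<sigma> * F (exp \<sigma>) * P \<sigma>
      = (\<Sum>k\<in>A. c k * (\<alpha> * (K \<sigma> * exp (of_real (\<nu> k + - 1) * \<sigma>)) + \<beta> * (K \<sigma> * exp (of_real (\<nu> k) * \<sigma>))
           + \<gamma> * (K \<sigma> * exp (of_real (\<nu> k + 1) * \<sigma>))))" for \<sigma>
    unfolding F P shift sum_distrib_left by (rule sum.cong) (simp_all add: exp_minus algebra_simps)
  moreover have "lattice_summable L (\<lambda>\<sigma>. \<Sum>k\<in>A. c k * (\<alpha> * (K \<sigma> * exp (of_real (\<nu> k + - 1) * \<sigma>))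
      + \<beta> * (K \<sigma> * exp (of_real (\<nu> k) * \<sigma>)) + \<gamma> * (K \<sigma> * exp (of_real (\<nu> k + 1) * \<sigma>))))"
    using \<nu> by (intro lattice_summable_sum lattice_summable_cmult lattice_summable_add K) force+
  ultimately show ?thesis
    by simp
qed

section \<open>The three-term recursion\<close>

lemma crec_Suc:
  assumes "X (Suc n) \<noteq> 0"
  shows "crec X Y Z E (Suc n) * X (Suc n)
    = crec X Y Z E n * (E + Y (Suc n)) - (if n = 0 then 0 else crec X Y Z E (n - 1)) * Z (Suc n)"
  using assms by (cases n) (simp_all add: numeral_2_eq_2)

text \<open>Multiplying the recursion by \<open>s\<^sup>k\<close> and summing, consecutive terms cancel and only the
  boundary terms at \<open>n\<close> survive.\<close>
lemma crec_weighted_sum: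
  fixes s :: complex
  assumes X0: "X 0 = 0" and X: "\<And>n. 1 \<le> n \<Longrightarrow> n \<le> N \<Longrightarrow> X n \<noteq> 0" and s: "s \<noteq> 0" and "n \<le> N"
  shows "(\<Sum>k\<le>n. crec X Y Z E k * s ^ k * (X k / s - E - Y (k + 1) + s * Z (k + 2)))
     = s ^ n * ((if n = 0 then 0 else crec X Y Z E (n - 1)) * Z (n + 1) - crec X Y Z E n * (E + Y (n + 1)))
       + s ^ (n + 1) * crec X Y Z E n * Z (n + 2)"
  using \<open>n \<le> N\<close>
proof (induction n)
  case 0
  then show ?case
    using X0 by (simp add: algebra_simps)
next
  case (Suc n)
  let ?c = "crec X Y Z E"
  have rec: "?c (Suc n) * X (Suc n) = ?c n * (E + Y (Suc n)) - (if n = 0 then 0 else ?c (n - 1)) * Z (Suc n)"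
    using X Suc.prems by (intro crec_Suc) auto
  have "(\<Sum>k\<le>Suc n. ?c k * s ^ k * (X k / s - E - Y (k + 1) + s * Z (k + 2)))
     = s ^ n * ((if n = 0 then 0 else ?c (n - 1)) * Z (n + 1) - ?c n * (E + Y (n + 1)))
       + s ^ (n + 1) * ?c n * Z (n + 2)
       + ?c (Suc n) * s ^ Suc n * (X (Suc n) / s - E - Y (Suc n + 1) + s * Z (Suc n + 2))"
    using Suc by simp
  also have "\<dots> = s ^ n * ((if n = 0 then 0 else ?c (n - 1)) * Z (n + 1) - ?c n * (E + Y (n + 1))
        + ?c (Suc n) * X (Suc n))
       + s ^ Suc n * (?c n * Z (Suc n + 1) - ?c (Suc n) * (E + Y (Suc n + 1)))
       + s ^ (Suc n + 1) * ?c (Suc n) * Z (Suc n + 2)"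
    using s by (simp add: field_simps)
  finally show ?case
    using rec by simp
qed

lemma crec_weighted_sum_eq_0:
  fixes s :: complex
  assumes "X 0 = 0" "\<And>n. 1 \<le> n \<Longrightarrow> n \<le> N \<Longrightarrow> X n \<noteq> 0" "s \<noteq> 0"
    and "cfin X Y Z N E = 0" and "Z (N + 2) = 0"
  shows "(\<Sum>k\<le>N. crec X Y Z E k * s ^ k * (X k / s - E - Y (k + 1) + s * Z (k + 2))) = 0"
proof -
  have "(\<Prod>n\<in>{1..N}. X n) \<noteq> 0"
    using assms(2) by (simp add: prod_zero_iff)
  then have "crec X Y Z E N * (E + Y (N + 1)) - (if N = 0 then 0 else crec X Y Z E (N - 1)) * Z (N + 1) = 0"
    using assms(4) by (simp add: cfin_def)
  then show ?thesis
    using crec_weighted_sum[where n = N and N = N and X = X and Y = Y and Z = Z and E = E and s = s,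
        OF assms(1-3) order_refl] assms(5)
    by (simp add: algebra_simps)
qed

section \<open>Jackson integrals as eigenfunctions\<close>

lemma int_shift_bij: "bij_betw (\<lambda>n::int. n + m) UNIV UNIV"
  by (rule bij_betwI[of _ _ _ "\<lambda>n. n - m"]) auto

lemma infsum_int_shift: "(\<Sum>\<^sub>\<infinity>n::int. f (n + m)) = (\<Sum>\<^sub>\<infinity>n::int. f n)"
  using infsum_reindex_bij_betw[OF int_shift_bij, of f] by simp

lemma summable_on_int_shift: "(\<lambda>n::int. f (n + m)) summable_on UNIV \<longleftrightarrow> f summable_on UNIV"
  using summable_on_reindex_bij_betw[OF int_shift_bij, of f] by simp

lemma infsum_lattice_realign:
  "(\<Sum>\<^sub>\<infinity>n::int. F (\<sigma> + of_int m * L + of_int n * L)) = (\<Sum>\<^sub>\<infinity>n::int. F (\<sigma> + of_int n * L))"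
  using infsum_int_shift[of "\<lambda>n. F (\<sigma> + of_int n * L)" m] by (simp add: algebra_simps)

lemma infsum_diff:
  fixes f g :: "'a \<Rightarrow> complex"
  assumes "f summable_on A" "g summable_on A"
  shows "(\<Sum>\<^sub>\<infinity>x\<in>A. f x - g x) = (\<Sum>\<^sub>\<infinity>x\<in>A. f x) - (\<Sum>\<^sub>\<infinity>x\<in>A. g x)"
  using infsum_add[OF assms(1) summable_on_uminus[THEN iffD2, OF assms(2)]] by (simp add: infsum_uminus)

lemma summable_on_diff:
  fixes f g :: "'a \<Rightarrow> complex"
  assumes "f summable_on A" "g summable_on A"
  shows "(\<lambda>x. f x - g x) summable_on A"
  using summable_on_add[OF assms(1) summable_on_uminus[THEN iffD2, OF assms(2)]] by simp

text \<open>Summation by parts on the lattice \<open>\<sigma>\<^sub>0 + \<int>L\<close>: the shifts are moved from \<open>K\<close> onto \<open>P\<close>,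
  where the dual equation applies.\<close>
lemma lattice_infsum_adjoint:
  fixes K P U V W :: "complex \<Rightarrow> complex"
  assumes dual: "\<And>\<sigma>. U \<sigma> * P (\<sigma> - L) + (W \<sigma> - e) * P \<sigma> + V \<sigma> * P (\<sigma> + L) = 0"
    and KP: "lattice_summable L (\<lambda>\<sigma>. K \<sigma> * P \<sigma>)"
    and KU: "lattice_summable L (\<lambda>\<sigma>. K \<sigma> * U \<sigma> * P (\<sigma> - L))"
    and KV: "lattice_summable L (\<lambda>\<sigma>. K \<sigma> * V \<sigma> * P (\<sigma> + L))"
  shows "(\<Sum>\<^sub>\<infinity>n::int. (K (\<sigma>\<^sub>0 + of_int n * L + L) * U (\<sigma>\<^sub>0 + of_int n * L + L)
                    + K (\<sigma>\<^sub>0 + of_int n * L - L) * V (\<sigma>\<^sub>0 + of_int n * L - L)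
                    + K (\<sigma>\<^sub>0 + of_int n * L) * W (\<sigma>\<^sub>0 + of_int n * L)) * P (\<sigma>\<^sub>0 + of_int n * L))
       = e * (\<Sum>\<^sub>\<infinity>n::int. K (\<sigma>\<^sub>0 + of_int n * L) * P (\<sigma>\<^sub>0 + of_int n * L))"
proof -
  define s where "s n = \<sigma>\<^sub>0 + of_int n * L" for n :: int
  define FU where "FU n = K (s n) * U (s n) * P (s n - L)" for n
  define FV where "FV n = K (s n) * V (s n) * P (s n + L)" for n
  have s_shift: "s n + L = s (n + 1)" "s n - L = s (n + - 1)" for n
    by (simp_all add: s_def algebra_simps)
  have FU: "FU summable_on UNIV" and FV: "FV summable_on UNIV"
    and KP': "(\<lambda>n. e * (K (s n) * P (s n))) summable_on UNIV"
    using KU KV KP unfolding FU_def FV_def s_def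
    by (auto intro: lattice_summableD summable_on_cmult_right)
  then have FU': "(\<lambda>n. FU (n + 1)) summable_on UNIV" and FV': "(\<lambda>n. FV (n + - 1)) summable_on UNIV"
    by (simp_all only: summable_on_int_shift)
  have summand: "(K (s n + L) * U (s n + L) + K (s n - L) * V (s n - L) + K (s n) * W (s n)) * P (s n)
      = FU (n + 1) + FV (n + - 1) + (e * (K (s n) * P (s n)) - FU n - FV n)" for n
  proof -
    have "K (s n) * W (s n) * P (s n) - (e * (K (s n) * P (s n)) - FU n - FV n)
        = K (s n) * (U (s n) * P (s n - L) + (W (s n) - e) * P (s n) + V (s n) * P (s n + L))"
      unfolding FU_def FV_def by (simp add: algebra_simps)
    then have "K (s n) * W (s n) * P (s n) = e * (K (s n) * P (s n)) - FU n - FV n"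
      unfolding dual by simp
    then show ?thesis
      unfolding FU_def FV_def s_shift by (simp add: algebra_simps s_shift[symmetric])
  qed
  show ?thesis
    unfolding s_def[symmetric] summand
    using FU FV FU' FV' KP'
    by (simp add: infsum_add infsum_diff summable_on_add summable_on_diff infsum_cmult_right'
        infsum_int_shift[of FU] infsum_int_shift[of FV "- 1", simplified])
qed

lemma A4_linear:
  "\<exists>cm cp c0. \<forall>g. A4 Lq t1 t2 h1 h2 l1 l2 a1 a2 b g u = cm * g (u - Lq) + cp * g (u + Lq) - c0 * g u"
  unfolding A4_def Let_def by (rule exI)+ (rule allI, rule refl)

lemma A4_cong:
  assumes "g (u - Lq) = g' (u - Lq)" "g u = g' u" "g (u + Lq) = g' (u + Lq)"
  shows "A4 Lq t1 t2 h1 h2 l1 l2 a1 a2 b g u = A4 Lq t1 t2 h1 h2 l1 l2 a1 a2 b g' u"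
  using assms by (simp add: A4_def)

lemma A4_cmult: "A4 Lq t1 t2 h1 h2 l1 l2 a1 a2 b (\<lambda>v. c * g v) u = c * A4 Lq t1 t2 h1 h2 l1 l2 a1 a2 b g u"
  by (simp add: A4_def Let_def algebra_simps)

lemma A4_mult_const: "A4 Lq t1 t2 h1 h2 l1 l2 a1 a2 b (\<lambda>v. g v * c) u = A4 Lq t1 t2 h1 h2 l1 l2 a1 a2 b g u * c"
  using A4_cmult[of Lq t1 t2 h1 h2 l1 l2 a1 a2 b c g u] by (simp add: mult.commute)

lemma A4_infsum:
  assumes "\<And>w. w \<in> {u - Lq, u, u + Lq} \<Longrightarrow> (\<lambda>n. f n w) summable_on A"
  shows "A4 Lq t1 t2 h1 h2 l1 l2 a1 a2 b (\<lambda>v. \<Sum>\<^sub>\<infinity>n\<in>A. f n v) u = (\<Sum>\<^sub>\<infinity>n\<in>A. A4 Lq t1 t2 h1 h2 l1 l2 a1 a2 b (f n) u)"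
proof -
  obtain cm cp c0 where A4: "\<And>g. A4 Lq t1 t2 h1 h2 l1 l2 a1 a2 b g u = cm * g (u - Lq) + cp * g (u + Lq) - c0 * g u"
    using A4_linear by blast
  have "(\<lambda>n. f n (u - Lq)) summable_on A" "(\<lambda>n. f n u) summable_on A" "(\<lambda>n. f n (u + Lq)) summable_on A"
    using assms by auto
  then show ?thesis
    unfolding A4
    by (simp add: infsum_add infsum_diff summable_on_add summable_on_diff summable_on_cmult_right infsum_cmult_right')
qed

lemma A4_lattice_integral:
  fixes K :: "complex \<Rightarrow> complex \<Rightarrow> complex" and P U V W :: "complex \<Rightarrow> complex" and Lq \<sigma>\<^sub>0 :: complex
  defines "s \<equiv> \<lambda>n::int. \<sigma>\<^sub>0 + of_int n * Lq"
  assumes kernel: "\<And>n. A4 Lq t1 t2 h1 h2 l1 l2 a1 a2 b (K (s n)) u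
      = \<kappa> * (K (s n + Lq) u * U (s n + Lq) + K (s n - Lq) u * V (s n - Lq) + K (s n) u * W (s n))"
    and dual: "\<And>\<sigma>. U \<sigma> * P (\<sigma> - Lq) + (W \<sigma> - e) * P \<sigma> + V \<sigma> * P (\<sigma> + Lq) = 0"
    and KP: "\<And>v. lattice_summable Lq (\<lambda>\<sigma>. K \<sigma> v * P \<sigma>)"
    and KU: "lattice_summable Lq (\<lambda>\<sigma>. K \<sigma> u * U \<sigma> * P (\<sigma> - Lq))"
    and KV: "lattice_summable Lq (\<lambda>\<sigma>. K \<sigma> u * V \<sigma> * P (\<sigma> + Lq))"
  shows "A4 Lq t1 t2 h1 h2 l1 l2 a1 a2 b (\<lambda>v. \<Sum>\<^sub>\<infinity>n::int. K (s n) v * P (s n)) u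
    = \<kappa> * e * (\<Sum>\<^sub>\<infinity>n::int. K (s n) u * P (s n))"
proof -
  have "A4 Lq t1 t2 h1 h2 l1 l2 a1 a2 b (\<lambda>v. \<Sum>\<^sub>\<infinity>n::int. K (s n) v * P (s n)) u
      = (\<Sum>\<^sub>\<infinity>n::int. A4 Lq t1 t2 h1 h2 l1 l2 a1 a2 b (\<lambda>v. K (s n) v * P (s n)) u)"
    using KP unfolding s_def by (intro A4_infsum) (auto intro: lattice_summableD)
  also have "\<dots> = \<kappa> * (\<Sum>\<^sub>\<infinity>n::int. (K (s n + Lq) u * U (s n + Lq) + K (s n - Lq) u * V (s n - Lq)
                            + K (s n) u * W (s n)) * P (s n))"
    unfolding A4_mult_const kernel by (simp add: infsum_cmult_right' mult.assoc)
  also have "\<dots> = \<kappa> * e * (\<Sum>\<^sub>\<infinity>n::int. K (s n) u * P (s n))"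
    unfolding s_def using lattice_infsum_adjoint[OF dual KP KU KV] by simp
  finally show ?thesis .
qed

lemma bilat_term_summable:
  assumes q: "norm q < 1" "q \<noteq> 0" and adm: "admissible q p"
    and series: "\<And>n. exp r * (prefac q p * bilat_term q p T n) = F (\<sigma> + of_int n * L)"
    and F: "lattice_summable L F"
  shows "bilat_term q p T summable_on UNIV"
proof -
  define c where "c = exp r * prefac q p"
  have "c \<noteq> 0"
    using adm prefac_nonzero[OF q] by (cases p) (auto simp: c_def)
  then have "inverse c * F (\<sigma> + of_int n * L) = bilat_term q p T n" for n
    unfolding series[symmetric] mult.assoc[symmetric] c_def[symmetric] by simp
  moreover have "(\<lambda>n. inverse c * F (\<sigma> + of_int n * L)) summable_on UNIV"
    using F by (intro summable_on_cmult_right lattice_summableD)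
  ultimately show ?thesis
    by simp
qed

lemma A4_bilateral_series:
  fixes PP :: "complex \<Rightarrow> complex \<times> complex \<times> complex \<times> complex" and S :: "complex \<Rightarrow> int \<Rightarrow> complex"
    and K :: "complex \<Rightarrow> complex \<Rightarrow> complex" and P U V W \<sigma> :: "complex \<Rightarrow> complex" and q \<rho> :: complex
  defines "g \<equiv> \<lambda>v. (1 - q) * exp (\<rho> * v) * prefac q (PP v) * (\<Sum>\<^sub>\<infinity>n\<in>UNIV. bilat_term q (PP v) (S v) n)"
  assumes adm: "admissible q (PP u)" "admissible q (PP (u - Lq))" "admissible q (PP (u + Lq))"
    and series: "\<And>v n. admissible q (PP v) \<Longrightarrow>
      exp (\<rho> * v) * (prefac q (PP v) * bilat_term q (PP v) (S v) n) = K (\<sigma> v + of_int n * Lq) v * P (\<sigma> v + of_int n * Lq)"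
    and lattice: "\<exists>m. \<sigma> (u - Lq) = \<sigma> u + of_int m * Lq" "\<exists>m. \<sigma> (u + Lq) = \<sigma> u + of_int m * Lq"
    and kernel: "\<And>n. A4 Lq t1 t2 h1 h2 l1 l2 a1 a2 b (K (\<sigma> u + of_int n * Lq)) u
      = \<kappa> * (K (\<sigma> u + of_int n * Lq + Lq) u * U (\<sigma> u + of_int n * Lq + Lq)
          + K (\<sigma> u + of_int n * Lq - Lq) u * V (\<sigma> u + of_int n * Lq - Lq)
          + K (\<sigma> u + of_int n * Lq) u * W (\<sigma> u + of_int n * Lq))"
    and dual: "\<And>\<tau>. U \<tau> * P (\<tau> - Lq) + (W \<tau> - e) * P \<tau> + V \<tau> * P (\<tau> + Lq) = 0"
    and KP: "\<And>v. lattice_summable Lq (\<lambda>\<tau>. K \<tau> v * P \<tau>)"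
    and KU: "lattice_summable Lq (\<lambda>\<tau>. K \<tau> u * U \<tau> * P (\<tau> - Lq))"
    and KV: "lattice_summable Lq (\<lambda>\<tau>. K \<tau> u * V \<tau> * P (\<tau> + Lq))"
  shows "A4 Lq t1 t2 h1 h2 l1 l2 a1 a2 b g u = \<kappa> * e * g u"
proof -
  define s where "s n = \<sigma> u + of_int n * Lq" for n :: int
  have on_lattice: "g v = (1 - q) * (\<Sum>\<^sub>\<infinity>n::int. K (s n) v * P (s n))" if v: "v \<in> {u - Lq, u, u + Lq}" for v
  proof -
    have "\<exists>m. \<sigma> v = \<sigma> u + of_int m * Lq"
      using v lattice by (auto intro: exI[where x = "0::int"])
    then obtain m where m: "\<sigma> v = \<sigma> u + of_int m * Lq" ..
    have adm_v: "admissible q (PP v)"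
      using v adm by auto
    have "g v = (1 - q) * (\<Sum>\<^sub>\<infinity>n::int. K (\<sigma> v + of_int n * Lq) v * P (\<sigma> v + of_int n * Lq))"
      unfolding g_def series[OF adm_v, symmetric] infsum_cmult_right' by (simp add: mult.assoc)
    then show ?thesis
      unfolding m s_def infsum_lattice_realign[of "\<lambda>\<tau>. K \<tau> v * P \<tau>"] .
  qed
  have "A4 Lq t1 t2 h1 h2 l1 l2 a1 a2 b g u
      = (1 - q) * A4 Lq t1 t2 h1 h2 l1 l2 a1 a2 b (\<lambda>v. \<Sum>\<^sub>\<infinity>n::int. K (s n) v * P (s n)) u"
    unfolding A4_cmult[symmetric] by (rule A4_cong) (simp_all add: on_lattice)
  also have "\<dots> = (1 - q) * (\<kappa> * e * (\<Sum>\<^sub>\<infinity>n::int. K (s n) u * P (s n)))"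
    unfolding s_def by (subst A4_lattice_integral[OF kernel dual KP KU KV]) simp_all
  also have "\<dots> = \<kappa> * e * g u"
    using on_lattice[of u] by simp
  finally show ?thesis .
qed

lemma affine_shift_on_lattice:
  fixes f :: "complex \<Rightarrow> complex"
  assumes "(\<exists>c. \<forall>u. f u = c) \<or> (\<exists>c. \<forall>u. f u = c + u)"
  shows "\<exists>m::int. f (u - L) = f u + of_int m * L" "\<exists>m::int. f (u + L) = f u + of_int m * L"
    and "\<exists>m::int. - f (u - L) = - f u + of_int m * L" "\<exists>m::int. - f (u + L) = - f u + of_int m * L"
proof -
  have pos: "\<exists>m::int. f (u + of_int k * L) = f u + of_int m * L" for k :: int
    using assms by (elim disjE exE) (rule exI[of _ 0], simp, rule exI[of _ k], simp add: algebra_simps)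
  have neg: "\<exists>m::int. - f (u + of_int k * L) = - f u + of_int m * L" for k :: int
  proof -
    obtain m where "f (u + of_int k * L) = f u + of_int m * L"
      using pos by blast
    then show ?thesis
      by (intro exI[of _ "- m"]) simp
  qed
  show "\<exists>m::int. f (u - L) = f u + of_int m * L" "\<exists>m::int. f (u + L) = f u + of_int m * L"
    and "\<exists>m::int. - f (u - L) = - f u + of_int m * L" "\<exists>m::int. - f (u + L) = - f u + of_int m * L"
    using pos[of "- 1"] pos[of 1] neg[of "- 1"] neg[of 1] by simp_all
qed

section \<open>The two solutions\<close>

locale jackson_solutions =
  fixes q Lq t1 t2 hp1 hp2 lp1 lp2 :: complex and ap1 ap2 bp :: real and N :: nat and E0 al1 :: complex
  assumes q: "exp Lq = q" "0 < norm q" "norm q < 1"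
    and t: "t1 \<noteq> 0" "t2 \<noteq> 0"
    and N: "(hp1 - hp2 - lp1 + lp2 + of_real ap1 - of_real ap2 + of_real bp - 2) / 2 = of_nat N"
    and bp: "bp < 0" and ap: "ap1 < ap2"
    and root: "cpoly Lq t1 t2 lp1 hp2 hp1 lp2 (of_real ap1) (of_real ap2) (of_real bp) N E0 = 0"
begin

abbreviation "Q \<equiv> qpw Lq"
abbreviation "X \<equiv> xs Lq t1 t2 lp1 hp2 hp1 lp2 (of_real ap1) (of_real ap2) (of_real bp)"
abbreviation "Y \<equiv> ys Lq t1 t2 lp1 hp2 hp1 lp2 (of_real ap1) (of_real ap2) (of_real bp)"
abbreviation "Z \<equiv> zs Lq t1 t2 lp1 hp2 hp1 lp2 (of_real ap1) (of_real ap2) (of_real bp)"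

definition "c k = cseq Lq t1 t2 lp1 hp2 hp1 lp2 (of_real ap1) (of_real ap2) (of_real bp) E0 k"

definition "h1 = hp1 - hp2 + lp2 - 1 - of_nat N"
definition "h2 = lp2 - 1 - of_nat N"
definition "al2 = al1 - of_real ap1 + of_real ap2 + hp2 - lp2 + 1 + of_nat N"
definition "be = hp1 - lp1 + of_real ap1 - of_real ap2 - 1 - of_nat N"

lemma q_nonzero: "q \<noteq> 0"
  using q(2) by auto

lemma hp1_eq: "hp1 = hp2 + lp1 - lp2 - of_real ap1 + of_real ap2 - of_real bp + 2 * of_nat N + 2"
  using N by (simp add: field_simps)

lemma lam1_eq: "lam1 lp1 hp2 hp1 lp2 (of_real ap1) (of_real ap2) (of_real bp) = - of_nat N - of_real ap2"
  unfolding lam1_def hp1_eq by (simp add: field_simps)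

lemma q_eq: "q = Q (1/2) * Q (1/2)"
  using q(1) qpw_add[of Lq "1/2" "1/2"] by simp

lemma exp_mult_shift:
  "exp (\<nu> * (\<sigma> - Lq)) = exp (\<nu> * \<sigma>) * Q (- \<nu>)" "exp (\<nu> * (\<sigma> + Lq)) = exp (\<nu> * \<sigma>) * Q \<nu>"
  by (simp_all add: qpw_def algebra_simps exp_add[symmetric] exp_diff[symmetric])

lemma exp_shift_Lq:
  "exp (z + Lq) = exp z * q" "exp (z - Lq) = exp z * inverse q"
  using q(1) by (simp_all add: exp_add exp_diff divide_inverse)

lemma inverse_q: "inverse q = Q (- (1/2)) * Q (- (1/2))"
  unfolding q_eq by (simp add: qpw_minus)

lemma exp_lattice: "exp (\<sigma> + of_int n * Lq) = exp \<sigma> * q powi n"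
  unfolding exp_add using exp_power_int[of Lq n] q(1) by simp

lemma exp_lattice_pred: "exp (\<sigma> + of_int n * Lq) * inverse q = exp \<sigma> * q powi (n - 1)"
  using q_nonzero by (simp add: exp_lattice power_int_diff divide_inverse mult.assoc)

text \<open>All powers of \<open>q\<close> are written as products of \<open>Q (1/2)\<close>, \<open>Q hp2\<close>, \<open>Q lp1\<close>, \<dots> and their
  inverses, so that the identities below become Laurent polynomial identities that \<open>algebra\<close> decides.\<close>
lemma Q_exponents:
  "Q (1 - of_nat k + lp1 + hp2 - (- of_nat N - of_real ap2))
     = Q (1/2) * Q (1/2) * Q hp2 * Q lp1 * Q (of_real ap2) * Q (of_nat N) * Q (- of_nat k)"
  "Q (of_nat k - of_real bp) = Q (- of_real bp) * Q (of_nat k)"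
  "Q (3/2 - of_nat (k + 1) - (- of_nat N - of_real ap2)) = Q (1/2) * Q (of_real ap2) * Q (of_nat N) * Q (- of_nat k)"
  "Q (of_nat (k + 1) - 3/2 + (- of_nat N - of_real ap2) + of_real ap1 + of_real ap2)
     = Q (- (1/2)) * Q (of_real ap1) * Q (- of_nat N) * Q (of_nat k)"
  "Q (2 - of_nat (k + 2) - (- of_nat N - of_real ap2)) = Q (of_real ap2) * Q (of_nat N) * Q (- of_nat k)"
  "Q (of_nat (k + 2) - 2 + (- of_nat N - of_real ap2) + of_real ap1)
     = Q (of_real ap1) * Q (- of_real ap2) * Q (- of_nat N) * Q (of_nat k)"
  "Q (of_nat (k + 2) - 2 + (- of_nat N - of_real ap2) + of_real ap2) = Q (- of_nat N) * Q (of_nat k)"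
  "Q hp1 = Q (1/2) * Q (1/2) * Q (1/2) * Q (1/2) * Q hp2 * Q lp1 * Q (- lp2) * Q (- of_real ap1) * Q (of_real ap2)
     * Q (- of_real bp) * Q (of_nat N) * Q (of_nat N)"
  by (simp_all only: qpw_add[symmetric]) (simp_all add: hp1_eq field_simps)

lemma Q_A4_exponents:
  "Q (h1 + 1/2) = Q (1/2) * Q (1/2) * Q (1/2) * Q lp1 * Q (- of_real ap1) * Q (of_real ap2) * Q (- of_real bp) * Q (of_nat N)"
  "Q (h2 + 1/2) = Q (- (1/2)) * Q lp2 * Q (- of_nat N)"
  "Q (lp1 - 1/2) = Q (- (1/2)) * Q lp1"
  "Q (lp2 - 1/2) = Q (- (1/2)) * Q lp2"
  "Q (al1 + al2) = Q (1/2) * Q (1/2) * Q hp2 * Q (- lp2) * Q (- of_real ap1) * Q (of_real ap2) * Q al1 * Q al1 * Q (of_nat N)"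
  "Q al2 = Q (1/2) * Q (1/2) * Q hp2 * Q (- lp2) * Q (- of_real ap1) * Q (of_real ap2) * Q al1 * Q (of_nat N)"
  "Q ((h1 + h2 + lp1 + lp2 + al1 + al2) / 2 + be / 2)
     = Q (1/2) * Q (1/2) * Q hp2 * Q lp1 * Q (- of_real ap1) * Q (of_real ap2) * Q (- of_real bp) * Q al1 * Q (of_nat N)"
  "Q ((h1 + h2 + lp1 + lp2 + al1 + al2) / 2 - be / 2) = Q lp1 * Q lp2 * Q (- of_real ap1) * Q (of_real ap2) * Q al1"
  "Q (al1 - of_real ap1) = Q (- of_real ap1) * Q al1"
  by (simp_all only: qpw_add[symmetric] h1_def h2_def al2_def be_def)
    (rule arg_cong[where f = "qpw Lq"], simp add: hp1_eq field_simps)+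

lemma Q_kernel_exponents:
  "Q (- hp1 + 1/2) = Q (- (1/2)) * Q (- (1/2)) * Q (- (1/2)) * Q (- hp2) * Q (- lp1) * Q lp2 * Q (of_real ap1)
     * Q (- of_real ap2) * Q (of_real bp) * Q (- of_nat N) * Q (- of_nat N)"
  "Q (- lp1 + 1/2) = Q (1/2) * Q (- lp1)"
  "Q (- hp2 + lp2 - of_nat N) = Q (- hp2) * Q lp2 * Q (- of_nat N)"
  "Q (lp1 + 1/2) = Q (1/2) * Q lp1"
  "Q (hp2 - lp2 + of_nat N + 1) = Q (1/2) * Q (1/2) * Q hp2 * Q (- lp2) * Q (of_nat N)"
  "Q (hp1 + 1/2) = Q (1/2) * Q (1/2) * Q (1/2) * Q (1/2) * Q (1/2) * Q hp2 * Q lp1 * Q (- lp2) * Q (- of_real ap1)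
     * Q (of_real ap2) * Q (- of_real bp) * Q (of_nat N) * Q (of_nat N)"
  "Q (al1 + hp2 - lp2 + of_nat N) = Q hp2 * Q (- lp2) * Q al1 * Q (of_nat N)"
  "Q (- al1 - hp2 + lp2 - of_nat N) = Q (- hp2) * Q lp2 * Q (- al1) * Q (- of_nat N)"
  by (simp_all only: qpw_add[symmetric]) (simp_all add: hp1_eq field_simps)

lemmas Q_inverse_pairs = qpw_mult_qpw_minus[of Lq "1/2"] qpw_mult_qpw_minus[of Lq hp2]
  qpw_mult_qpw_minus[of Lq lp1] qpw_mult_qpw_minus[of Lq lp2] qpw_mult_qpw_minus[of Lq "of_real ap1"]
  qpw_mult_qpw_minus[of Lq "of_real ap2"] qpw_mult_qpw_minus[of Lq "of_real bp"]
  qpw_mult_qpw_minus[of Lq "of_nat N"]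

definition "\<nu>1 k = 1 - bp + real k"
definition "\<nu>2 k = ap2 - ap1 + 1 + real N - real k"

definition "P1 \<sigma> = (\<Sum>k\<le>N. c k * exp (of_real (\<nu>1 k) * \<sigma>))"
definition "P2 \<sigma> = (\<Sum>k\<le>N. c k * exp (of_real (\<nu>2 k) * \<sigma>))"

lemma Q_\<nu>_exponents:
  "Q (- of_real (\<nu>1 k)) = Q (- (1/2)) * Q (- (1/2)) * Q (of_real bp) * Q (- of_nat k)"
  "Q (of_real (\<nu>1 k)) = Q (1/2) * Q (1/2) * Q (- of_real bp) * Q (of_nat k)"
  "Q (- of_real (\<nu>2 k))
     = Q (- (1/2)) * Q (- (1/2)) * Q (of_real ap1) * Q (- of_real ap2) * Q (- of_nat N) * Q (of_nat k)"
  "Q (of_real (\<nu>2 k)) = Q (1/2) * Q (1/2) * Q (- of_real ap1) * Q (of_real ap2) * Q (of_nat N) * Q (- of_nat k)"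
  by (simp_all only: qpw_add[symmetric]) (simp_all add: \<nu>1_def \<nu>2_def field_simps)

definition "kx = t1 * t2 * Q (1/2) * Q (1/2) * Q lp1 * Q hp2 * Q (of_nat N) * Q (of_real ap2)"
definition "Yh = Q lp1 * t1 + Q hp2 * t2"
definition "Yl = Q (1/2) * Q (1/2) * Q (1/2) * Q (1/2) * Q hp2 * Q lp1 * Q (- lp2) * Q (- of_real ap1) * Q (of_real ap2)
  * Q (- of_real bp) * Q (of_nat N) * Q (of_nat N) * t1 + Q lp2 * t2"

text \<open>Coefficients, as functions of \<open>\<xi> = e\<^sup>\<sigma>\<close>, of the \<open>q\<close>-difference operators in \<open>\<xi>\<close> into which
  \<open>A\<^sup>\<langle>\<^sup>4\<^sup>\<rangle>\<close> is transformed on the kernels (\<open>A4_K1\<close>, \<open>A4_K2\<close>); on the powers \<open>\<xi>\<^sup>\<nu>\<close> occurring in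
  \<open>P1\<close>, \<open>P2\<close> their adjoints act through the recursion coefficients \<open>X\<close>, \<open>Y\<close>, \<open>Z\<close>.\<close>
definition "U1 s = Q (1/2) * Q (1/2) * Q (- of_real bp)
  * (kx * inverse s - Q (1/2) * Q (of_nat N) * Q (of_real ap2) * Yh + Q (of_nat N) * Q (of_real ap2) * s)"
definition "W1 s = - kx * (1 + Q (- of_real bp)) * inverse s - (Q (of_real ap1) + Q (of_real ap2)) * s"
definition "V1 s = Q (- (1/2)) * Q (- (1/2)) * Q (of_real bp)
  * (kx * Q (- of_real bp) * inverse s - Q (of_real ap1) * Q (- of_nat N) * Q (- (1/2)) * Yl + Q (of_real ap1) * Q (- of_nat N) * s)"

definition "U2 s = Q (- of_real ap1) * Q (of_real ap2) * Q (1/2) * Q (1/2) * Q (of_nat N)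
  * (kx * Q (- of_real bp) * s - Q (of_real ap1) * Q (- of_nat N) * Q (- (1/2)) * Yl + Q (of_real ap1) * Q (- of_nat N) * inverse s)"
definition "W2 s = - kx * (1 + Q (- of_real bp)) * s - (Q (of_real ap1) + Q (of_real ap2)) * inverse s"
definition "V2 s = Q (of_real ap1) * Q (- of_real ap2) * Q (- (1/2)) * Q (- (1/2)) * Q (- of_nat N)
  * (kx * s - Q (1/2) * Q (of_nat N) * Q (of_real ap2) * Yh + Q (of_nat N) * Q (of_real ap2) * inverse s)"

lemma dual1_monomial:
  assumes "s \<noteq> 0"
  shows "U1 s * Q (- of_real (\<nu>1 k)) + W1 s + V1 s * Q (of_real (\<nu>1 k))
    = X k * inverse s - Y (k + 1) + s * Z (k + 2)"
  unfolding xs_def ys_def zs_def Let_def lam1_eq U1_def V1_def W1_def kx_def Yh_def Yl_def Q_exponents Q_\<nu>_exponents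
  using assms Q_inverse_pairs qpw_mult_qpw_minus[of Lq "of_nat k"] by algebra

lemma dual2_monomial:
  assumes "s \<noteq> 0"
  shows "U2 s * Q (- of_real (\<nu>2 k)) + W2 s + V2 s * Q (of_real (\<nu>2 k))
    = X k * s - Y (k + 1) + inverse s * Z (k + 2)"
  unfolding xs_def ys_def zs_def Let_def lam1_eq U2_def V2_def W2_def kx_def Yh_def Yl_def Q_exponents Q_\<nu>_exponents
  using assms Q_inverse_pairs qpw_mult_qpw_minus[of Lq "of_nat k"] by algebra

lemma X_0: "X 0 = 0"
  by (simp add: xs_def Let_def)

lemma X_nonzero:
  assumes "1 \<le> n"
  shows "X n \<noteq> 0"
proof -
  have ReLq: "Re Lq < 0"
    using q by (metis exp_less_one_iff norm_exp_eq_Re)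
  have "norm (Q (of_nat n)) = exp (real n * Re Lq)" "norm (Q (of_nat n - of_real bp)) = exp ((real n - bp) * Re Lq)"
    by (simp_all add: qpw_def left_diff_distrib)
  then have "norm (Q (of_nat n)) < 1" "norm (Q (of_nat n - of_real bp)) < 1"
    using ReLq assms bp by (simp_all add: mult_pos_neg)
  then have "1 - Q (of_nat n) \<noteq> 0" "1 - Q (of_nat n - of_real bp) \<noteq> 0"
    by auto
  then show ?thesis
    using t by (simp add: xs_def Let_def)
qed

lemma Z_vanishes: "Z (N + 2) = 0"
  by (simp add: zs_def Let_def lam1_eq)

lemma c_weighted_sum_eq_0:
  assumes "s \<noteq> 0"
  shows "(\<Sum>k\<le>N. c k * s ^ k * (X k / s - E0 - Y (k + 1) + s * Z (k + 2))) = 0"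
  unfolding c_def cseq_def
  using crec_weighted_sum_eq_0[OF X_0 X_nonzero assms root[unfolded cpoly_def] Z_vanishes] by simp

lemma P1_dual:
  "U1 (exp \<sigma>) * P1 (\<sigma> - Lq) + (W1 (exp \<sigma>) - E0) * P1 \<sigma> + V1 (exp \<sigma>) * P1 (\<sigma> + Lq) = 0"
proof -
  define s where "s = exp \<sigma>"
  have s: "s \<noteq> 0"
    by (simp add: s_def)
  have monomial: "exp (of_real (\<nu>1 k) * \<sigma>) = exp ((1 - of_real bp) * \<sigma>) * s ^ k" for k
    by (simp add: s_def \<nu>1_def algebra_simps exp_add[symmetric] exp_of_nat_mult[symmetric])
  have "U1 s * P1 (\<sigma> - Lq) + (W1 s - E0) * P1 \<sigma> + V1 s * P1 (\<sigma> + Lq)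
      = (\<Sum>k\<le>N. c k * exp (of_real (\<nu>1 k) * \<sigma>)
          * (U1 s * Q (- of_real (\<nu>1 k)) + W1 s + V1 s * Q (of_real (\<nu>1 k)) - E0))"
    unfolding P1_def exp_mult_shift sum_distrib_left sum.distrib[symmetric]
    by (rule sum.cong) (simp_all add: algebra_simps)
  also have "\<dots> = exp ((1 - of_real bp) * \<sigma>) * (\<Sum>k\<le>N. c k * s ^ k * (X k / s - E0 - Y (k + 1) + s * Z (k + 2)))"
    unfolding dual1_monomial[OF s] monomial sum_distrib_left
    by (rule sum.cong) (simp_all add: divide_inverse algebra_simps)
  also have "\<dots> = 0"
    unfolding c_weighted_sum_eq_0[OF s] by simp
  finally show ?thesis
    unfolding s_def .
qed

lemma P2_dual:
  "U2 (exp \<sigma>) * P2 (\<sigma> - Lq) + (W2 (exp \<sigma>) - E0) * P2 \<sigma> + V2 (exp \<sigma>) * P2 (\<sigma> + Lq) = 0"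
proof -
  define s where "s = inverse (exp \<sigma>)"
  have s: "s \<noteq> 0" and s_inv: "inverse s \<noteq> 0"
    by (simp_all add: s_def)
  have monomial: "exp (of_real (\<nu>2 k) * \<sigma>) = exp ((of_real (ap2 - ap1) + 1 + of_nat N) * \<sigma>) * s ^ k" for k
  proof -
    have "of_real (\<nu>2 k) * \<sigma> = (of_real (ap2 - ap1) + 1 + of_nat N) * \<sigma> - of_nat k * \<sigma>"
      by (simp add: \<nu>2_def algebra_simps)
    then show ?thesis
      by (simp add: s_def exp_diff exp_of_nat_mult divide_inverse power_inverse)
  qed
  have "U2 (inverse s) * P2 (\<sigma> - Lq) + (W2 (inverse s) - E0) * P2 \<sigma> + V2 (inverse s) * P2 (\<sigma> + Lq)
      = (\<Sum>k\<le>N. c k * exp (of_real (\<nu>2 k) * \<sigma>)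
          * (U2 (inverse s) * Q (- of_real (\<nu>2 k)) + W2 (inverse s) + V2 (inverse s) * Q (of_real (\<nu>2 k)) - E0))"
    unfolding P2_def exp_mult_shift sum_distrib_left sum.distrib[symmetric]
    by (rule sum.cong) (simp_all add: algebra_simps)
  also have "\<dots> = exp ((of_real (ap2 - ap1) + 1 + of_nat N) * \<sigma>)
      * (\<Sum>k\<le>N. c k * s ^ k * (X k / s - E0 - Y (k + 1) + s * Z (k + 2)))"
    unfolding dual2_monomial[OF s_inv] monomial sum_distrib_left
    by (rule sum.cong) (simp_all add: divide_inverse algebra_simps)
  also have "\<dots> = 0"
    unfolding c_weighted_sum_eq_0[OF s] by simp
  finally show ?thesis
    unfolding s_def by simp
qed

lemma A4_expand:
  "A4 Lq t1 t2 h1 h2 lp1 lp2 al1 al2 be g u =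
     inverse (exp u) * (exp u - Q (h1 + 1/2) * t1) * (exp u - Q (h2 + 1/2) * t2) * g (u - Lq)
   + Q (al1 + al2) * inverse (exp u) * (exp u - Q (lp1 - 1/2) * t1) * (exp u - Q (lp2 - 1/2) * t2) * g (u + Lq)
   - ((Q al1 + Q al2) * exp u + (Q ((h1 + h2 + lp1 + lp2 + al1 + al2) / 2 + be / 2)
        + Q ((h1 + h2 + lp1 + lp2 + al1 + al2) / 2 - be / 2)) * t1 * t2 * inverse (exp u)) * g u"
  unfolding A4_def Let_def by (simp add: distrib_left flip: qpw_add)

text \<open>With \<open>\<xi> = e\<^sup>\<sigma>\<close> and \<open>x = e\<^sup>v\<close>, \<open>g\<^sub>1(x) = (1 - q) \<Sum>\<^sub>n K1 (\<sigma> + n Lq) v * P1 (\<sigma> + n Lq)\<close>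
  (\<open>g1_summand\<close>); for \<open>g\<^sub>2\<close> the same holds with \<open>\<xi>\<^sup>-\<^sup>1 = e\<^sup>\<sigma>\<close>.\<close>
definition "K1 \<sigma> v = exp (- al1 * v) * qinf_ratio q (Q (- hp1 + 1/2) / t1 * exp \<sigma>) (inverse (exp v) * exp \<sigma>)
  (Q (- lp1 + 1/2) / t1 * exp \<sigma>) (Q (- hp2 + lp2 - of_nat N) * inverse (exp v) * exp \<sigma>)"

definition "K2 \<sigma> v = exp ((- al1 - hp2 + lp2 - of_nat N) * v) * qinf_ratio q (Q (lp1 + 1/2) * t1 * exp \<sigma>)
  (Q (hp2 - lp2 + of_nat N + 1) * exp v * exp \<sigma>) (Q (hp1 + 1/2) * t1 * exp \<sigma>) (q * exp v * exp \<sigma>)"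

definition "K1_factor \<sigma> u = exp (- al1 * u) * (qinf q (Q (- lp1 + 1/2) / t1 * exp \<sigma> * q)
  * qinf q (Q (- hp2 + lp2 - of_nat N) * inverse (exp u) * exp \<sigma> * q)
  / (qinf q (Q (- hp1 + 1/2) / t1 * exp \<sigma> * inverse q) * qinf q (inverse (exp u) * exp \<sigma> * inverse q)))"

definition "K2_factor \<sigma> u = exp ((- al1 - hp2 + lp2 - of_nat N) * u) * (qinf q (Q (hp1 + 1/2) * t1 * exp \<sigma> * q)
  * qinf q (q * exp u * exp \<sigma> * q)
  / (qinf q (Q (lp1 + 1/2) * t1 * exp \<sigma> * inverse q) * qinf q (Q (hp2 - lp2 + of_nat N + 1) * exp u * exp \<sigma> * inverse q)))"

lemma K1_neighbours:
  fixes \<sigma> u :: complex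
  defines "za \<equiv> Q (- hp1 + 1/2) / t1 * exp \<sigma>" and "zb \<equiv> inverse (exp u) * exp \<sigma>"
    and "zc \<equiv> Q (- lp1 + 1/2) / t1 * exp \<sigma>" and "zd \<equiv> Q (- hp2 + lp2 - of_nat N) * inverse (exp u) * exp \<sigma>"
  assumes "qinf q (za * inverse q) \<noteq> 0" "qinf q (zb * inverse q) \<noteq> 0"
  shows "K1 \<sigma> (u - Lq) = Q al1 * (K1_factor \<sigma> u * ((1 - zc) * (1 - za * inverse q) * (1 - zb * inverse q) * (1 - zb)))"
    and "K1 \<sigma> (u + Lq) = Q (- al1) * (K1_factor \<sigma> u * ((1 - zc) * (1 - zd * inverse q) * (1 - zd) * (1 - za * inverse q)))"
    and "K1 \<sigma> u = K1_factor \<sigma> u * ((1 - zc) * (1 - zd) * (1 - za * inverse q) * (1 - zb * inverse q))"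
    and "K1 (\<sigma> + Lq) u = K1_factor \<sigma> u * ((1 - za * inverse q) * (1 - za) * (1 - zb * inverse q) * (1 - zb))"
    and "K1 (\<sigma> - Lq) u = K1_factor \<sigma> u * ((1 - zc * inverse q) * (1 - zc) * (1 - zd * inverse q) * (1 - zd))"
proof -
  note forms = qinf_ratio_shifted_forms[OF q(3) q_nonzero assms(5,6), of zc zd]
  have exp_al1: "exp (- al1 * (u - Lq)) = Q al1 * exp (- al1 * u)" "exp (- al1 * (u + Lq)) = Q (- al1) * exp (- al1 * u)"
    by (simp_all add: qpw_def algebra_simps exp_add[symmetric])
  show "K1 \<sigma> (u - Lq) = Q al1 * (K1_factor \<sigma> u * ((1 - zc) * (1 - za * inverse q) * (1 - zb * inverse q) * (1 - zb)))"
    using forms(2) q_nonzero unfolding K1_def exp_al1 K1_factor_def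
    by (simp add: za_def zb_def zc_def zd_def exp_shift_Lq ac_simps)
  show "K1 \<sigma> (u + Lq) = Q (- al1) * (K1_factor \<sigma> u * ((1 - zc) * (1 - zd * inverse q) * (1 - zd) * (1 - za * inverse q)))"
    using forms(3) q_nonzero unfolding K1_def exp_al1 K1_factor_def exp_shift_Lq
    by (simp add: za_def zb_def zc_def zd_def ac_simps)
  show "K1 \<sigma> u = K1_factor \<sigma> u * ((1 - zc) * (1 - zd) * (1 - za * inverse q) * (1 - zb * inverse q))"
    using forms(1) unfolding K1_def K1_factor_def za_def zb_def zc_def zd_def by (simp add: ac_simps)
  show "K1 (\<sigma> + Lq) u = K1_factor \<sigma> u * ((1 - za * inverse q) * (1 - za) * (1 - zb * inverse q) * (1 - zb))"
    using forms(4) unfolding K1_def K1_factor_def exp_shift_Lq by (simp add: za_def zb_def zc_def zd_def ac_simps)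
  show "K1 (\<sigma> - Lq) u = K1_factor \<sigma> u * ((1 - zc * inverse q) * (1 - zc) * (1 - zd * inverse q) * (1 - zd))"
    using forms(5) unfolding K1_def K1_factor_def exp_shift_Lq by (simp add: za_def zb_def zc_def zd_def ac_simps)
qed

lemma K2_neighbours:
  fixes \<sigma> u :: complex
  defines "za \<equiv> Q (lp1 + 1/2) * t1 * exp \<sigma>" and "zb \<equiv> Q (hp2 - lp2 + of_nat N + 1) * exp u * exp \<sigma>"
    and "zc \<equiv> Q (hp1 + 1/2) * t1 * exp \<sigma>" and "zd \<equiv> q * exp u * exp \<sigma>"
  assumes "qinf q (za * inverse q) \<noteq> 0" "qinf q (zb * inverse q) \<noteq> 0"
  shows "K2 \<sigma> (u - Lq) = Q (al1 + hp2 - lp2 + of_nat N)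
      * (K2_factor \<sigma> u * ((1 - zc) * (1 - zd * inverse q) * (1 - zd) * (1 - za * inverse q)))"
    and "K2 \<sigma> (u + Lq) = Q (- al1 - hp2 + lp2 - of_nat N)
      * (K2_factor \<sigma> u * ((1 - zc) * (1 - za * inverse q) * (1 - zb * inverse q) * (1 - zb)))"
    and "K2 \<sigma> u = K2_factor \<sigma> u * ((1 - zc) * (1 - zd) * (1 - za * inverse q) * (1 - zb * inverse q))"
    and "K2 (\<sigma> + Lq) u = K2_factor \<sigma> u * ((1 - za * inverse q) * (1 - za) * (1 - zb * inverse q) * (1 - zb))"
    and "K2 (\<sigma> - Lq) u = K2_factor \<sigma> u * ((1 - zc * inverse q) * (1 - zc) * (1 - zd * inverse q) * (1 - zd))"
proof -
  define \<rho> where "\<rho> = - al1 - hp2 + lp2 - of_nat N"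
  note forms = qinf_ratio_shifted_forms[OF q(3) q_nonzero assms(5,6), of zc zd]
  have exp_\<rho>: "exp (\<rho> * (u - Lq)) = Q (al1 + hp2 - lp2 + of_nat N) * exp (\<rho> * u)"
    "exp (\<rho> * (u + Lq)) = Q (- al1 - hp2 + lp2 - of_nat N) * exp (\<rho> * u)"
    by (simp_all add: \<rho>_def qpw_def algebra_simps exp_add[symmetric])
  show "K2 \<sigma> (u - Lq) = Q (al1 + hp2 - lp2 + of_nat N)
      * (K2_factor \<sigma> u * ((1 - zc) * (1 - zd * inverse q) * (1 - zd) * (1 - za * inverse q)))"
    using forms(3) q_nonzero unfolding K2_def K2_factor_def \<rho>_def[symmetric] exp_\<rho> exp_shift_Lq
    by (simp add: za_def zb_def zc_def zd_def ac_simps)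
  show "K2 \<sigma> (u + Lq) = Q (- al1 - hp2 + lp2 - of_nat N)
      * (K2_factor \<sigma> u * ((1 - zc) * (1 - za * inverse q) * (1 - zb * inverse q) * (1 - zb)))"
    using forms(2) q_nonzero unfolding K2_def K2_factor_def \<rho>_def[symmetric] exp_\<rho> exp_shift_Lq
    by (simp add: za_def zb_def zc_def zd_def ac_simps)
  show "K2 \<sigma> u = K2_factor \<sigma> u * ((1 - zc) * (1 - zd) * (1 - za * inverse q) * (1 - zb * inverse q))"
    using forms(1) unfolding K2_def K2_factor_def za_def zb_def zc_def zd_def by (simp add: ac_simps)
  show "K2 (\<sigma> + Lq) u = K2_factor \<sigma> u * ((1 - za * inverse q) * (1 - za) * (1 - zb * inverse q) * (1 - zb))"
    using forms(4) unfolding K2_def K2_factor_def exp_shift_Lq by (simp add: za_def zb_def zc_def zd_def ac_simps)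
  show "K2 (\<sigma> - Lq) u = K2_factor \<sigma> u * ((1 - zc * inverse q) * (1 - zc) * (1 - zd * inverse q) * (1 - zd))"
    using forms(5) unfolding K2_def K2_factor_def exp_shift_Lq by (simp add: za_def zb_def zc_def zd_def ac_simps)
qed

lemma A4_K1:
  assumes "qinf q (Q (- hp1 + 1/2) / t1 * exp \<sigma> * inverse q) \<noteq> 0"
    and "qinf q (inverse (exp u) * exp \<sigma> * inverse q) \<noteq> 0"
  shows "A4 Lq t1 t2 h1 h2 lp1 lp2 al1 al2 be (K1 \<sigma>) u
    = Q (al1 - of_real ap1) * (K1 (\<sigma> + Lq) u * U1 (exp (\<sigma> + Lq)) + K1 (\<sigma> - Lq) u * V1 (exp (\<sigma> - Lq))
        + K1 \<sigma> u * W1 (exp \<sigma>))"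
proof -
  obtain it1 ieu ies where inv: "inverse t1 = it1" "inverse (exp u) = ieu" "inverse (exp \<sigma>) = ies"
    and rel: "t1 * it1 = 1" "exp u * ieu = 1" "exp \<sigma> * ies = 1"
    using t by (simp add: exp_minus[symmetric] mult_exp_exp)
  show ?thesis
    unfolding A4_expand K1_neighbours[OF assms] exp_shift_Lq U1_def V1_def W1_def kx_def Yh_def Yl_def
    unfolding Q_A4_exponents Q_kernel_exponents inverse_q divide_inverse[of _ t1]
    unfolding q_eq inverse_mult_distrib qpw_minus[symmetric] minus_minus inv
    using Q_inverse_pairs qpw_mult_qpw_minus[of Lq al1] rel
    by algebra
qed

lemma A4_K2:
  assumes "qinf q (Q (lp1 + 1/2) * t1 * exp \<sigma> * inverse q) \<noteq> 0"
    and "qinf q (Q (hp2 - lp2 + of_nat N + 1) * exp u * exp \<sigma> * inverse q) \<noteq> 0"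
  shows "A4 Lq t1 t2 h1 h2 lp1 lp2 al1 al2 be (K2 \<sigma>) u
    = Q (al1 - of_real ap1) * (K2 (\<sigma> + Lq) u * U2 (exp (\<sigma> + Lq)) + K2 (\<sigma> - Lq) u * V2 (exp (\<sigma> - Lq))
        + K2 \<sigma> u * W2 (exp \<sigma>))"
proof -
  obtain it1 ieu ies where inv: "inverse t1 = it1" "inverse (exp u) = ieu" "inverse (exp \<sigma>) = ies"
    and rel: "t1 * it1 = 1" "exp u * ieu = 1" "exp \<sigma> * ies = 1"
    using t by (simp add: exp_minus[symmetric] mult_exp_exp)
  show ?thesis
    unfolding A4_expand K2_neighbours[OF assms] exp_shift_Lq U2_def V2_def W2_def kx_def Yh_def Yl_def
    unfolding Q_A4_exponents Q_kernel_exponents inverse_q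
    unfolding q_eq inverse_mult_distrib qpw_minus[symmetric] minus_minus inv
    using Q_inverse_pairs qpw_mult_qpw_minus[of Lq al1] rel
    by algebra
qed

text \<open>For both kernels the quotient \<open>c d / (a b)\<close> of the product parameters is \<open>q\<^sup>\<delta>\<close>, so the kernel
  times \<open>\<xi>\<^sup>\<mu>\<close> is summable on the lattice for \<open>0 < \<mu> < \<delta>\<close>.\<close>
definition "\<delta> = real N + 2 - ap1 + ap2 - bp"

lemma \<nu>_bounds:
  assumes "k \<le> N"
  shows "0 < \<nu>1 k - 1" "\<nu>1 k + 1 < \<delta>" "0 < \<nu>2 k - 1" "\<nu>2 k + 1 < \<delta>"
  using assms bp ap by (simp_all add: \<nu>1_def \<nu>2_def \<delta>_def)

lemma Q_\<delta>: "exp (of_real \<delta> * Lq) = Q (of_real \<delta>)"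
  by (simp add: qpw_def)

lemma K1_exp_lattice_summable:
  assumes "0 < \<mu>" "\<mu> < \<delta>"
  shows "lattice_summable Lq (\<lambda>\<sigma>. K1 \<sigma> v * exp (of_real \<mu> * \<sigma>))"
proof -
  have QQ: "Q (- lp1 + 1/2) * Q (- hp2 + lp2 - of_nat N) = Q (of_real \<delta>) * Q (- hp1 + 1/2)"
    by (simp only: qpw_add[symmetric]) (rule arg_cong[where f = Q], simp add: \<delta>_def hp1_eq field_simps)
  have "Q (- lp1 + 1/2) / t1 * (Q (- hp2 + lp2 - of_nat N) * inverse (exp v))
      = (Q (- lp1 + 1/2) * Q (- hp2 + lp2 - of_nat N)) * (inverse t1 * inverse (exp v))"
    by (simp only: divide_inverse mult_ac)
  also have "\<dots> = exp (of_real \<delta> * Lq) * (Q (- hp1 + 1/2) / t1 * inverse (exp v))"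
    unfolding QQ Q_\<delta> by (simp only: divide_inverse mult_ac)
  finally have "lattice_summable Lq (\<lambda>\<sigma>. qinf_ratio q (Q (- hp1 + 1/2) / t1 * exp \<sigma>) (inverse (exp v) * exp \<sigma>)
      (Q (- lp1 + 1/2) / t1 * exp \<sigma>) (Q (- hp2 + lp2 - of_nat N) * inverse (exp v) * exp \<sigma>) * exp (of_real \<mu> * \<sigma>))"
    using t by (intro lattice_summable_qinf_ratio[OF q(1,3) _ _ _ assms]) simp_all
  then show ?thesis
    unfolding K1_def mult.assoc by (rule lattice_summable_cmult)
qed

lemma K2_exp_lattice_summable:
  assumes "0 < \<mu>" "\<mu> < \<delta>"
  shows "lattice_summable Lq (\<lambda>\<sigma>. K2 \<sigma> v * exp (of_real \<mu> * \<sigma>))"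
proof -
  have QQ: "Q (hp1 + 1/2) * Q 1 = Q (of_real \<delta>) * (Q (lp1 + 1/2) * Q (hp2 - lp2 + of_nat N + 1))"
    by (simp only: qpw_add[symmetric]) (rule arg_cong[where f = Q], simp add: \<delta>_def hp1_eq field_simps)
  have "Q (hp1 + 1/2) * t1 * (q * exp v) = (Q (hp1 + 1/2) * Q 1) * (t1 * exp v)"
    using q(1) by (simp only: qpw_1 mult_ac)
  also have "\<dots> = exp (of_real \<delta> * Lq) * (Q (lp1 + 1/2) * t1 * (Q (hp2 - lp2 + of_nat N + 1) * exp v))"
    unfolding QQ Q_\<delta> by (simp only: mult_ac)
  finally have "lattice_summable Lq (\<lambda>\<sigma>. qinf_ratio q (Q (lp1 + 1/2) * t1 * exp \<sigma>)
      (Q (hp2 - lp2 + of_nat N + 1) * exp v * exp \<sigma>) (Q (hp1 + 1/2) * t1 * exp \<sigma>) (q * exp v * exp \<sigma>)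
      * exp (of_real \<mu> * \<sigma>))"
    using t by (intro lattice_summable_qinf_ratio[OF q(1,3) _ _ _ assms]) simp_all
  then show ?thesis
    unfolding K2_def mult.assoc by (rule lattice_summable_cmult)
qed

lemma P1_shift:
  "P1 (\<sigma> - Lq) = (\<Sum>k\<le>N. (c k * Q (- of_real (\<nu>1 k))) * exp (of_real (\<nu>1 k) * \<sigma>))"
  "P1 (\<sigma> + Lq) = (\<Sum>k\<le>N. (c k * Q (of_real (\<nu>1 k))) * exp (of_real (\<nu>1 k) * \<sigma>))"
  unfolding P1_def exp_mult_shift by (simp_all add: ac_simps)

lemma P2_shift:
  "P2 (\<sigma> - Lq) = (\<Sum>k\<le>N. (c k * Q (- of_real (\<nu>2 k))) * exp (of_real (\<nu>2 k) * \<sigma>))"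
  "P2 (\<sigma> + Lq) = (\<Sum>k\<le>N. (c k * Q (of_real (\<nu>2 k))) * exp (of_real (\<nu>2 k) * \<sigma>))"
  unfolding P2_def exp_mult_shift by (simp_all add: ac_simps)

lemma dual_coefficients_laurent_linear: "laurent_linear U1" "laurent_linear V1" "laurent_linear U2" "laurent_linear V2"
  unfolding U1_def[abs_def] V1_def[abs_def] U2_def[abs_def] V2_def[abs_def]
  by (rule laurent_linear_inverse_first laurent_linear_inverse_last)+

lemma kernel_terms_lattice_summable:
  assumes K: "\<And>\<mu>. 0 < \<mu> \<Longrightarrow> \<mu> < \<delta> \<Longrightarrow> lattice_summable Lq (\<lambda>\<sigma>. K \<sigma> * exp (of_real \<mu> * \<sigma>))"
    and \<nu>: "\<And>k. k \<le> N \<Longrightarrow> 0 < \<nu> k - 1" "\<And>k. k \<le> N \<Longrightarrow> \<nu> k + 1 < \<delta>"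
    and P: "\<And>\<sigma>. P \<sigma> = (\<Sum>k\<le>N. c k * exp (of_real (\<nu> k) * \<sigma>))"
    and P_shift: "\<And>\<sigma>. P (\<sigma> - Lq) = (\<Sum>k\<le>N. (c k * Q (- of_real (\<nu> k))) * exp (of_real (\<nu> k) * \<sigma>))"
      "\<And>\<sigma>. P (\<sigma> + Lq) = (\<Sum>k\<le>N. (c k * Q (of_real (\<nu> k))) * exp (of_real (\<nu> k) * \<sigma>))"
    and U: "laurent_linear U" and V: "laurent_linear V"
  shows "lattice_summable Lq (\<lambda>\<sigma>. K \<sigma> * P \<sigma>)"
    and "lattice_summable Lq (\<lambda>\<sigma>. K \<sigma> * U (exp \<sigma>) * P (\<sigma> - Lq))"
    and "lattice_summable Lq (\<lambda>\<sigma>. K \<sigma> * V (exp \<sigma>) * P (\<sigma> + Lq))"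
proof -
  have \<nu>': "\<And>k. k \<in> {..N} \<Longrightarrow> 0 < \<nu> k - 1 \<and> \<nu> k + 1 < \<delta>"
    using \<nu> by simp
  show "lattice_summable Lq (\<lambda>\<sigma>. K \<sigma> * P \<sigma>)"
    using lattice_summable_laurent_exp_sum[OF K \<nu>' laurent_linear_const[of 1] P] by simp
  show "lattice_summable Lq (\<lambda>\<sigma>. K \<sigma> * U (exp \<sigma>) * P (\<sigma> - Lq))"
    by (rule lattice_summable_laurent_exp_sum[OF K \<nu>' U P_shift(1)])
  show "lattice_summable Lq (\<lambda>\<sigma>. K \<sigma> * V (exp \<sigma>) * P (\<sigma> + Lq))"
    by (rule lattice_summable_laurent_exp_sum[OF K \<nu>' V P_shift(2)])
qed

lemma K1_lattice_summable:
  "lattice_summable Lq (\<lambda>\<sigma>. K1 \<sigma> v * P1 \<sigma>)"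
  "lattice_summable Lq (\<lambda>\<sigma>. K1 \<sigma> v * U1 (exp \<sigma>) * P1 (\<sigma> - Lq))"
  "lattice_summable Lq (\<lambda>\<sigma>. K1 \<sigma> v * V1 (exp \<sigma>) * P1 (\<sigma> + Lq))"
  using kernel_terms_lattice_summable[where K = "\<lambda>\<sigma>. K1 \<sigma> v", OF K1_exp_lattice_summable \<nu>_bounds(1,2)
      P1_def P1_shift dual_coefficients_laurent_linear(1,2)]
  by simp_all

lemma K2_lattice_summable:
  "lattice_summable Lq (\<lambda>\<sigma>. K2 \<sigma> v * P2 \<sigma>)"
  "lattice_summable Lq (\<lambda>\<sigma>. K2 \<sigma> v * U2 (exp \<sigma>) * P2 (\<sigma> - Lq))"
  "lattice_summable Lq (\<lambda>\<sigma>. K2 \<sigma> v * V2 (exp \<sigma>) * P2 (\<sigma> + Lq))"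
  using kernel_terms_lattice_summable[where K = "\<lambda>\<sigma>. K2 \<sigma> v", OF K2_exp_lattice_summable \<nu>_bounds(3,4)
      P2_def P2_shift dual_coefficients_laurent_linear(3,4)]
  by simp_all

definition "S1 Lxi v n = (\<Sum>k\<le>N. qpw Lq ((- of_real bp + 1 + of_nat k) * of_int n)
  * exp ((- of_real bp + 1 + of_nat k) * Lxi v) * cseq Lq t1 t2 lp1 hp2 hp1 lp2 (of_real ap1) (of_real ap2) (of_real bp) E0 k)"
definition "S2 Lxi v n = (\<Sum>k\<le>N. qpw Lq ((- of_real ap1 + of_real ap2 + 1 + of_nat N - of_nat k) * of_int n)
  * exp ((of_real ap1 - of_real ap2 - 1 - of_nat N + of_nat k) * Lxi v)
  * cseq Lq t1 t2 lp1 hp2 hp1 lp2 (of_real ap1) (of_real ap2) (of_real bp) E0 k)"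

lemma S1_eq_P1: "S1 Lxi v n = P1 (Lxi v + of_int n * Lq)"
  unfolding S1_def P1_def
proof (rule sum.cong)
  fix k
  have "of_real (\<nu>1 k) * (Lxi v + of_int n * Lq) = (- of_real bp + 1 + of_nat k) * Lxi v + (- of_real bp + 1 + of_nat k) * of_int n * Lq"
    by (simp add: \<nu>1_def algebra_simps)
  then show "Q ((- of_real bp + 1 + of_nat k) * of_int n) * exp ((- of_real bp + 1 + of_nat k) * Lxi v)
      * cseq Lq t1 t2 lp1 hp2 hp1 lp2 (of_real ap1) (of_real ap2) (of_real bp) E0 k
    = c k * exp (of_real (\<nu>1 k) * (Lxi v + of_int n * Lq))"
    unfolding qpw_def c_def by (simp only: exp_add) (simp add: mult_ac)
qed simp

lemma S2_eq_P2: "S2 Lxi v n = P2 (- Lxi v + of_int n * Lq)"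
  unfolding S2_def P2_def
proof (rule sum.cong)
  fix k
  have "of_real (\<nu>2 k) * (- Lxi v + of_int n * Lq) = (of_real ap1 - of_real ap2 - 1 - of_nat N + of_nat k) * Lxi v
      + (- of_real ap1 + of_real ap2 + 1 + of_nat N - of_nat k) * of_int n * Lq"
    by (simp add: \<nu>2_def algebra_simps)
  then show "Q ((- of_real ap1 + of_real ap2 + 1 + of_nat N - of_nat k) * of_int n)
      * exp ((of_real ap1 - of_real ap2 - 1 - of_nat N + of_nat k) * Lxi v)
      * cseq Lq t1 t2 lp1 hp2 hp1 lp2 (of_real ap1) (of_real ap2) (of_real bp) E0 k
    = c k * exp (of_real (\<nu>2 k) * (- Lxi v + of_int n * Lq))"
    unfolding qpw_def c_def by (simp only: exp_add) (simp add: mult_ac)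
qed simp

lemma g1_summand:
  assumes "admissible q (par1 Lq t1 hp1 hp2 lp1 lp2 N Lxi v)"
  shows "exp (- al1 * v) * (prefac q (par1 Lq t1 hp1 hp2 lp1 lp2 N Lxi v) * bilat_term q (par1 Lq t1 hp1 hp2 lp1 lp2 N Lxi v) (S1 Lxi v) n)
    = K1 (Lxi v + of_int n * Lq) v * P1 (Lxi v + of_int n * Lq)"
proof -
  have shifted: "x * exp (Lxi v) / t1 * q powi n = x / t1 * exp (Lxi v + of_int n * Lq)"
    "exp (Lxi v) / exp v * q powi n = inverse (exp v) * exp (Lxi v + of_int n * Lq)"
    "x * exp (Lxi v) / exp v * q powi n = x * inverse (exp v) * exp (Lxi v + of_int n * Lq)" for x
    unfolding exp_lattice by (simp_all only: divide_inverse mult_ac)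
  show ?thesis
    unfolding par1_def prefac_mult_bilat_term[OF q(3) q_nonzero assms[unfolded par1_def]] shifted K1_def S1_eq_P1
    by (simp only: mult_ac)
qed

lemma g2_summand:
  assumes "admissible q (par2 Lq t1 hp1 hp2 lp1 lp2 N Lxi v)"
  shows "exp ((- al1 - hp2 + lp2 - of_nat N) * v)
      * (prefac q (par2 Lq t1 hp1 hp2 lp1 lp2 N Lxi v) * bilat_term q (par2 Lq t1 hp1 hp2 lp1 lp2 N Lxi v) (S2 Lxi v) n)
    = K2 (- Lxi v + of_int n * Lq) v * P2 (- Lxi v + of_int n * Lq)"
proof -
  have shifted: "x / exp (Lxi v) * q powi n = x * exp (- Lxi v + of_int n * Lq)" for x
    unfolding exp_lattice exp_minus by (simp only: divide_inverse mult_ac)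
  show ?thesis
    unfolding par2_def prefac_mult_bilat_term[OF q(3) q_nonzero assms[unfolded par2_def]]
    unfolding shifted K2_def S2_eq_P2 q(1) by (simp only: mult_ac)
qed
lemma A4_K1_on_lattice:
  assumes adm: "admissible q (par1 Lq t1 hp1 hp2 lp1 lp2 N Lxi u)" and "\<tau> \<in> range (\<lambda>n. Lxi u + of_int n * Lq)"
  shows "A4 Lq t1 t2 h1 h2 lp1 lp2 al1 al2 be (K1 \<tau>) u
    = Q (al1 - of_real ap1) * (K1 (\<tau> + Lq) u * U1 (exp (\<tau> + Lq)) + K1 (\<tau> - Lq) u * V1 (exp (\<tau> - Lq))
        + K1 \<tau> u * W1 (exp \<tau>))"
proof (rule A4_K1)
  obtain n where \<tau>: "\<tau> = Lxi u + of_int n * Lq"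
    using assms(2) by auto
  note nz = admissible_qinf_nonzero(1,2)[OF q(3) q_nonzero adm[unfolded par1_def], of "n - 1"]
  have shift: "exp \<tau> * inverse q = exp (Lxi u) * q powi (n - 1)"
    unfolding \<tau> by (rule exp_lattice_pred)
  have "Q (- hp1 + 1/2) / t1 * exp \<tau> * inverse q = Q (- hp1 + 1/2) * exp (Lxi u) / t1 * q powi (n - 1)"
    and "inverse (exp u) * exp \<tau> * inverse q = exp (Lxi u) / exp u * q powi (n - 1)"
    unfolding mult.assoc[of _ "exp \<tau>"] shift by (simp_all only: divide_inverse mult_ac)
  then show "qinf q (Q (- hp1 + 1/2) / t1 * exp \<tau> * inverse q) \<noteq> 0"
    and "qinf q (inverse (exp u) * exp \<tau> * inverse q) \<noteq> 0"
    using nz by (simp_all only: not_False_eq_True)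
qed

lemma A4_K2_on_lattice:
  assumes adm: "admissible q (par2 Lq t1 hp1 hp2 lp1 lp2 N Lxi u)" and "\<tau> \<in> range (\<lambda>n. - Lxi u + of_int n * Lq)"
  shows "A4 Lq t1 t2 h1 h2 lp1 lp2 al1 al2 be (K2 \<tau>) u
    = Q (al1 - of_real ap1) * (K2 (\<tau> + Lq) u * U2 (exp (\<tau> + Lq)) + K2 (\<tau> - Lq) u * V2 (exp (\<tau> - Lq))
        + K2 \<tau> u * W2 (exp \<tau>))"
proof (rule A4_K2)
  obtain n where \<tau>: "\<tau> = - Lxi u + of_int n * Lq"
    using assms(2) by auto
  note nz = admissible_qinf_nonzero(1,2)[OF q(3) q_nonzero adm[unfolded par2_def], of "n - 1"]
  have shift: "exp \<tau> * inverse q = inverse (exp (Lxi u)) * q powi (n - 1)"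
    unfolding \<tau> exp_lattice_pred exp_minus ..
  have "Q (lp1 + 1/2) * t1 * exp \<tau> * inverse q = Q (lp1 + 1/2) * t1 / exp (Lxi u) * q powi (n - 1)"
    "Q (hp2 - lp2 + of_nat N + 1) * exp u * exp \<tau> * inverse q
       = Q (hp2 - lp2 + of_nat N + 1) * exp u / exp (Lxi u) * q powi (n - 1)"
    unfolding mult.assoc[of _ "exp \<tau>"] shift by (simp_all only: divide_inverse mult_ac)
  then show "qinf q (Q (lp1 + 1/2) * t1 * exp \<tau> * inverse q) \<noteq> 0"
    and "qinf q (Q (hp2 - lp2 + of_nat N + 1) * exp u * exp \<tau> * inverse q) \<noteq> 0"
    using nz by (simp_all only: not_False_eq_True)
qed

lemma g1_eigenfunction:
  assumes "(\<exists>c. \<forall>u. Lxi u = c) \<or> (\<exists>c. \<forall>u. Lxi u = c + u)"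
  shows "(\<forall>u. admissible q (par1 Lq t1 hp1 hp2 lp1 lp2 N Lxi u) \<longrightarrow>
            bilat_term q (par1 Lq t1 hp1 hp2 lp1 lp2 N Lxi u) (S1 Lxi u) summable_on UNIV)
    \<and> (\<forall>u. admissible q (par1 Lq t1 hp1 hp2 lp1 lp2 N Lxi u) \<and> admissible q (par1 Lq t1 hp1 hp2 lp1 lp2 N Lxi (u - Lq))
           \<and> admissible q (par1 Lq t1 hp1 hp2 lp1 lp2 N Lxi (u + Lq)) \<longrightarrow>
         A4 Lq t1 t2 h1 h2 lp1 lp2 al1 al2 be (\<lambda>v. (1 - q) * exp (- al1 * v) * prefac q (par1 Lq t1 hp1 hp2 lp1 lp2 N Lxi v)
             * (\<Sum>\<^sub>\<infinity>n\<in>UNIV. bilat_term q (par1 Lq t1 hp1 hp2 lp1 lp2 N Lxi v) (S1 Lxi v) n)) u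
         = Q (al1 - of_real ap1) * E0 * ((1 - q) * exp (- al1 * u) * prefac q (par1 Lq t1 hp1 hp2 lp1 lp2 N Lxi u)
             * (\<Sum>\<^sub>\<infinity>n\<in>UNIV. bilat_term q (par1 Lq t1 hp1 hp2 lp1 lp2 N Lxi u) (S1 Lxi u) n)))"
proof (intro conjI allI impI)
  fix u
  show "bilat_term q (par1 Lq t1 hp1 hp2 lp1 lp2 N Lxi u) (S1 Lxi u) summable_on UNIV"
    if "admissible q (par1 Lq t1 hp1 hp2 lp1 lp2 N Lxi u)"
    by (rule bilat_term_summable[where F = "\<lambda>\<tau>. K1 \<tau> u * P1 \<tau>", OF q(3) q_nonzero that g1_summand[OF that]
        K1_lattice_summable(1)])
  show "A4 Lq t1 t2 h1 h2 lp1 lp2 al1 al2 be (\<lambda>v. (1 - q) * exp (- al1 * v) * prefac q (par1 Lq t1 hp1 hp2 lp1 lp2 N Lxi v)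
      * (\<Sum>\<^sub>\<infinity>n\<in>UNIV. bilat_term q (par1 Lq t1 hp1 hp2 lp1 lp2 N Lxi v) (S1 Lxi v) n)) u
    = Q (al1 - of_real ap1) * E0 * ((1 - q) * exp (- al1 * u) * prefac q (par1 Lq t1 hp1 hp2 lp1 lp2 N Lxi u)
      * (\<Sum>\<^sub>\<infinity>n\<in>UNIV. bilat_term q (par1 Lq t1 hp1 hp2 lp1 lp2 N Lxi u) (S1 Lxi u) n))"
    if "admissible q (par1 Lq t1 hp1 hp2 lp1 lp2 N Lxi u) \<and> admissible q (par1 Lq t1 hp1 hp2 lp1 lp2 N Lxi (u - Lq))
      \<and> admissible q (par1 Lq t1 hp1 hp2 lp1 lp2 N Lxi (u + Lq))"
    using that by (intro A4_bilateral_series[where K = K1 and P = P1 and \<sigma> = Lxi and U = "\<lambda>\<tau>. U1 (exp \<tau>)"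
        and V = "\<lambda>\<tau>. V1 (exp \<tau>)" and W = "\<lambda>\<tau>. W1 (exp \<tau>)"] g1_summand A4_K1_on_lattice P1_dual
        K1_lattice_summable affine_shift_on_lattice(1,2)[OF assms]) auto
qed

lemma g2_eigenfunction:
  assumes "(\<exists>c. \<forall>u. Lxi u = c) \<or> (\<exists>c. \<forall>u. Lxi u = c + u)"
  shows "(\<forall>u. admissible q (par2 Lq t1 hp1 hp2 lp1 lp2 N Lxi u) \<longrightarrow>
            bilat_term q (par2 Lq t1 hp1 hp2 lp1 lp2 N Lxi u) (S2 Lxi u) summable_on UNIV)
    \<and> (\<forall>u. admissible q (par2 Lq t1 hp1 hp2 lp1 lp2 N Lxi u) \<and> admissible q (par2 Lq t1 hp1 hp2 lp1 lp2 N Lxi (u - Lq))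
           \<and> admissible q (par2 Lq t1 hp1 hp2 lp1 lp2 N Lxi (u + Lq)) \<longrightarrow>
         A4 Lq t1 t2 h1 h2 lp1 lp2 al1 al2 be (\<lambda>v. (1 - q) * exp ((- al1 - hp2 + lp2 - of_nat N) * v)
             * prefac q (par2 Lq t1 hp1 hp2 lp1 lp2 N Lxi v)
             * (\<Sum>\<^sub>\<infinity>n\<in>UNIV. bilat_term q (par2 Lq t1 hp1 hp2 lp1 lp2 N Lxi v) (S2 Lxi v) n)) u
         = Q (al1 - of_real ap1) * E0 * ((1 - q) * exp ((- al1 - hp2 + lp2 - of_nat N) * u)
             * prefac q (par2 Lq t1 hp1 hp2 lp1 lp2 N Lxi u)
             * (\<Sum>\<^sub>\<infinity>n\<in>UNIV. bilat_term q (par2 Lq t1 hp1 hp2 lp1 lp2 N Lxi u) (S2 Lxi u) n)))"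
proof (intro conjI allI impI)
  fix u
  show "bilat_term q (par2 Lq t1 hp1 hp2 lp1 lp2 N Lxi u) (S2 Lxi u) summable_on UNIV"
    if "admissible q (par2 Lq t1 hp1 hp2 lp1 lp2 N Lxi u)"
    by (rule bilat_term_summable[where F = "\<lambda>\<tau>. K2 \<tau> u * P2 \<tau>", OF q(3) q_nonzero that g2_summand[OF that]
        K2_lattice_summable(1)])
  show "A4 Lq t1 t2 h1 h2 lp1 lp2 al1 al2 be (\<lambda>v. (1 - q) * exp ((- al1 - hp2 + lp2 - of_nat N) * v)
      * prefac q (par2 Lq t1 hp1 hp2 lp1 lp2 N Lxi v)
      * (\<Sum>\<^sub>\<infinity>n\<in>UNIV. bilat_term q (par2 Lq t1 hp1 hp2 lp1 lp2 N Lxi v) (S2 Lxi v) n)) u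
    = Q (al1 - of_real ap1) * E0 * ((1 - q) * exp ((- al1 - hp2 + lp2 - of_nat N) * u)
      * prefac q (par2 Lq t1 hp1 hp2 lp1 lp2 N Lxi u)
      * (\<Sum>\<^sub>\<infinity>n\<in>UNIV. bilat_term q (par2 Lq t1 hp1 hp2 lp1 lp2 N Lxi u) (S2 Lxi u) n))"
    if "admissible q (par2 Lq t1 hp1 hp2 lp1 lp2 N Lxi u) \<and> admissible q (par2 Lq t1 hp1 hp2 lp1 lp2 N Lxi (u - Lq))
      \<and> admissible q (par2 Lq t1 hp1 hp2 lp1 lp2 N Lxi (u + Lq))"
    using that by (intro A4_bilateral_series[where K = K2 and P = P2 and \<sigma> = "\<lambda>u. - Lxi u" and U = "\<lambda>\<tau>. U2 (exp \<tau>)"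
        and V = "\<lambda>\<tau>. V2 (exp \<tau>)" and W = "\<lambda>\<tau>. W2 (exp \<tau>)"] g2_summand A4_K2_on_lattice P2_dual
        K2_lattice_summable affine_shift_on_lattice(3,4)[OF assms]) auto
qed

end

theorem theorem3p2:
  fixes q Lq t1 t2 :: complex
    and hp1 hp2 lp1 lp2 :: complex
    and ap1 ap2 bp :: real
    and N :: nat
    and E0 al1 :: complex
    and Lxi :: "complex \<Rightarrow> complex"
  assumes hq: "exp Lq = q" "0 < norm q" "norm q < 1"
    and ht: "t1 \<noteq> 0" "t2 \<noteq> 0"
    and hN: "(hp1 - hp2 - lp1 + lp2 + of_real ap1 - of_real ap2 + of_real bp - 2) / 2 = of_nat N"
    and hbp: "bp < 0"
    and hap: "ap1 < ap2"
    and hroot: "cpoly Lq t1 t2 lp1 hp2 hp1 lp2 (of_real ap1) (of_real ap2) (of_real bp) N E0 = 0"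
    and hxi: "(\<exists>c. \<forall>u. Lxi u = c) \<or> (\<exists>c. \<forall>u. Lxi u = c + u)"
  defines "al2 \<equiv> al1 - of_real ap1 + of_real ap2 + hp2 - lp2 + 1 + of_nat N"
    and "be \<equiv> hp1 - lp1 + of_real ap1 - of_real ap2 - 1 - of_nat N"
    and "l1 \<equiv> lp1"
    and "l2 \<equiv> lp2"
    and "h1 \<equiv> hp1 - hp2 + lp2 - 1 - of_nat N"
    and "h2 \<equiv> lp2 - 1 - of_nat N"
    and "E \<equiv> qpw Lq (al1 - of_real ap1) * E0"
    and "P1 \<equiv> par1 Lq t1 hp1 hp2 lp1 lp2 N Lxi"
    and "P2 \<equiv> par2 Lq t1 hp1 hp2 lp1 lp2 N Lxi"
    and "S1 \<equiv> \<lambda>u (n::int). \<Sum>k\<le>N. qpw Lq ((- of_real bp + 1 + of_nat k) * of_int n)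
                          * exp ((- of_real bp + 1 + of_nat k) * Lxi u) * cseq Lq t1 t2 lp1 hp2 hp1 lp2 (of_real ap1) (of_real ap2) (of_real bp) E0 k"
    and "S2 \<equiv> \<lambda>u (n::int). \<Sum>k\<le>N. qpw Lq ((- of_real ap1 + of_real ap2 + 1 + of_nat N - of_nat k) * of_int n)
                          * exp ((of_real ap1 - of_real ap2 - 1 - of_nat N + of_nat k) * Lxi u) * cseq Lq t1 t2 lp1 hp2 hp1 lp2 (of_real ap1) (of_real ap2) (of_real bp) E0 k"
  shows "(\<forall>u. admissible q (P1 u) \<longrightarrow> bilat_term q (P1 u) (S1 u) summable_on UNIV)
       \<and> (\<forall>u. admissible q (P1 u) \<and> admissible q (P1 (u - Lq)) \<and> admissible q (P1 (u + Lq)) \<longrightarrow>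
              A4 Lq t1 t2 h1 h2 l1 l2 al1 al2 be
                 (\<lambda>v. (1 - q) * exp (- al1 * v) * prefac q (P1 v)
                        * (\<Sum>\<^sub>\<infinity>n\<in>UNIV. bilat_term q (P1 v) (S1 v) n)) u
              = E * ((1 - q) * exp (- al1 * u) * prefac q (P1 u)
                        * (\<Sum>\<^sub>\<infinity>n\<in>UNIV. bilat_term q (P1 u) (S1 u) n)))
       \<and> (\<forall>u. admissible q (P2 u) \<longrightarrow> bilat_term q (P2 u) (S2 u) summable_on UNIV)
       \<and> (\<forall>u. admissible q (P2 u) \<and> admissible q (P2 (u - Lq)) \<and> admissible q (P2 (u + Lq)) \<longrightarrow>
              A4 Lq t1 t2 h1 h2 l1 l2 al1 al2 be
                 (\<lambda>v. (1 - q) * exp ((- al1 - hp2 + lp2 - of_nat N) * v) * prefac q (P2 v)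
                        * (\<Sum>\<^sub>\<infinity>n\<in>UNIV. bilat_term q (P2 v) (S2 v) n)) u
              = E * ((1 - q) * exp ((- al1 - hp2 + lp2 - of_nat N) * u) * prefac q (P2 u)
                        * (\<Sum>\<^sub>\<infinity>n\<in>UNIV. bilat_term q (P2 u) (S2 u) n)))"
proof -
  interpret J: jackson_solutions q Lq t1 t2 hp1 hp2 lp1 lp2 ap1 ap2 bp N E0 al1
    using hq ht hN hbp hap hroot by unfold_locales auto
  show ?thesis
    using J.g1_eigenfunction[OF hxi] J.g2_eigenfunction[OF hxi]
    unfolding J.h1_def J.h2_def J.al2_def J.be_def J.S1_def[abs_def] J.S2_def[abs_def]
    unfolding al2_def be_def l1_def l2_def h1_def h2_def E_def P1_def P2_def S1_def S2_def
    by blast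
qed

end
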